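(* For every $\tau\in(0,1)$, the discrete Aubry set $\widetilde{\mathcal A}^{\tau}_L$ and the discrete Mather set $\widetilde{\mathcal M}^{\tau}_L$ are nonempty and compact, and $\widetilde{\mathcal M}^{\tau}_L\subset\widetilde{\mathcal A}^{\tau}_L$.
   Context: $\mathbb{T}^d=\mathbb{R}^d/\mathbb{Z}^d$; functions on $\mathbb{T}^d$ are identified with $\mathbb{Z}^d$-periodic functions on $\mathbb{R}^d$. $H$ is a Tonelli Hamiltonian on $\mathbb{T}^d\times\mathbb{R}^d$ ($C^2$, $D^2_{pp}H>0$, superlinear in $p$ uniformly in $x$) and $L(x,v)=\sup_p\{p\cdot v-H(x,p)\}$ its Legendre transform. For $\tau>0$, $\mathcal L_\tau(x,y):=\tau L(x,\frac{y-x}{\tau})$. The discrete Lax--Oleinik equation is $u_\tau(y)+\bar L(\tau)\tau=\inf_{x\in\mathbb{R}^d}(u_\tau(x)+\mathcal L_\tau(x,y))$; there is a unique constant $\bar L(\tau)$ for which a continuous periodic solution exists; fix such a solution $u_\tau$. A calibrated configuration for $u_\tau(x)$ is a sequence $\{x_{-k}\}_{k\ge0}$ with $x_0=x$ and $u_\tau(x_{-k})+\tau\bar L(\tau)=u_\tau(x_{-k-1})+\mathcal L_\tau(x_{-k-1},x_{-k})$ for all $k\ge0$. Discrete Aubry set: $\widetilde\Sigma^\tau_L:=\{(x,v):$ there is a calibrated configuration for $u_\tau(x+\tau v)$ with $x_{-1}=x$, $(x_0-x_{-1})/\tau=v\}$; $\Psi^n_{L,\tau}(x,v)$ is the set of points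 $(x_{-n-1},\frac{x_{-n}-x_{-n-1}}{\tau})$ over all such calibrated configurations for $u_\tau(x+\tau v)$ with $x_{-1}=x$, $v=(x_0-x_{-1})/\tau$ (extended to sets by union); $\widetilde{\mathcal A}^\tau_L:=\bigcap_{n\in\mathbb{N}}\Psi^n_{L,\tau}(\widetilde\Sigma^\tau_L)\subset\mathbb{T}^d\times\mathbb{R}^d$. Discrete Mather set: a probability measure $\mu_\tau$ on $\mathbb{T}^d\times\mathbb{T}^d$ is discrete holonomic if $\int(\varphi(y)-\varphi(x))\,d\mu_\tau(x,y)=0$ for all $\varphi\in C(\mathbb{T}^d)$; let $\mathcal H_\tau$ be the set of such measures. Equivalently, via $\Theta_\tau(x,v)=(x,x+\tau v)$, these are push-forwards $(\Theta_\tau)_\sharp\tilde\mu_\tau$ of probability measures $\tilde\mu_\tau$ on $\mathbb{T}^d\times\mathbb{R}^d$ with $\int(\varphi(x+\tau v)-\varphi(x))\,d\tilde\mu_\tau=0$, and $\int\mathcal L_\tau\,d\mu_\tau=\tau\int L\,d\tilde\mu_\tau$. A discrete Mather measure is a $\mu_\tau\in\mathcal H_\tau$ minimizing $\mathfrak A_\tau(\mu_\tau)=\int\mathcal L_\tau\,d\mu_\tau$ over $\mathcal H_\tau$. The discrete Mather set $\widetilde{\mathcal M}^\tau_L$ is the closure of the union of the supports of all discrete Mather measures, identified with a subset of $\mathbb{T}^d\times\mathbb{R}^d$ via $(x,y)\mapsto(x,(y-x)/\tau)$. *)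

theory Defs
  imports "HOL-Probability.Probability"
begin

text \<open>Points of the torus are represented by their lifts in real^'n; a function on the torus
  is a Z^d-periodic function on real^'n.\<close>

definition int_vec :: "real^'n \<Rightarrow> bool" where
  "int_vec z \<longleftrightarrow> (\<forall>i. z $ i \<in> \<int>)"

definition periodic :: "(real^'n \<Rightarrow> 'b) \<Rightarrow> bool" where
  "periodic f \<longleftrightarrow> (\<forall>x z. int_vec z \<longrightarrow> f (x + z) = f x)"

definition tonelli :: "(real^'n \<Rightarrow> real^'n \<Rightarrow> real) \<Rightarrow> bool" where
  "tonelli H \<longleftrightarrow>
     (\<forall>p. periodic (\<lambda>x. H x p)) \<and>
     (\<exists>(H' :: (real^'n) \<times> (real^'n) \<Rightarrow> ((real^'n) \<times> (real^'n)) \<Rightarrow>\<^sub>L real)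
        (H'' :: (real^'n) \<times> (real^'n) \<Rightarrow> ((real^'n) \<times> (real^'n)) \<Rightarrow>\<^sub>L (((real^'n) \<times> (real^'n)) \<Rightarrow>\<^sub>L real)).
        (\<forall>z. ((\<lambda>(x, p). H x p) has_derivative blinfun_apply (H' z)) (at z)) \<and>
        (\<forall>z. (H' has_derivative blinfun_apply (H'' z)) (at z)) \<and>
        continuous_on UNIV H'' \<and>
        (\<forall>x p w. w \<noteq> 0 \<longrightarrow> blinfun_apply (blinfun_apply (H'' (x, p)) (0, w)) (0, w) > 0)) \<and>
     (\<forall>A. \<exists>B. \<forall>x p. H x p \<ge> A * norm p - B)"

definition lagrangian :: "(real^'n \<Rightarrow> real^'n \<Rightarrow> real) \<Rightarrow> real^'n \<Rightarrow> real^'n \<Rightarrow> real" where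
  "lagrangian H x v = (SUP p. p \<bullet> v - H x p)"

definition Lcal :: "(real^'n \<Rightarrow> real^'n \<Rightarrow> real) \<Rightarrow> real \<Rightarrow> real^'n \<Rightarrow> real^'n \<Rightarrow> real" where
  "Lcal H \<tau> x y = \<tau> * lagrangian H x ((1 / \<tau>) *\<^sub>R (y - x))"

text \<open>u solves the discrete Lax--Oleinik equation with constant c (= Lbar(tau)).\<close>
definition solves_dLO :: "(real^'n \<Rightarrow> real^'n \<Rightarrow> real) \<Rightarrow> real \<Rightarrow> real \<Rightarrow> (real^'n \<Rightarrow> real) \<Rightarrow> bool" where
  "solves_dLO H \<tau> c u \<longleftrightarrow> (\<forall>y. u y + c * \<tau> = (INF x. u x + Lcal H \<tau> x y))"

text \<open>Calibrated configuration: xs k stands for x_{-k}; it is calibrated for u(xs 0).\<close>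
definition calibrated :: "(real^'n \<Rightarrow> real^'n \<Rightarrow> real) \<Rightarrow> real \<Rightarrow> real \<Rightarrow> (real^'n \<Rightarrow> real) \<Rightarrow> (nat \<Rightarrow> real^'n) \<Rightarrow> bool" where
  "calibrated H \<tau> c u xs \<longleftrightarrow>
     (\<forall>k. u (xs k) + \<tau> * c = u (xs (Suc k)) + Lcal H \<tau> (xs (Suc k)) (xs k))"

definition Sigma_set :: "(real^'n \<Rightarrow> real^'n \<Rightarrow> real) \<Rightarrow> real \<Rightarrow> real \<Rightarrow> (real^'n \<Rightarrow> real) \<Rightarrow> ((real^'n) \<times> (real^'n)) set" where
  "Sigma_set H \<tau> c u = {(x, v). \<exists>xs. calibrated H \<tau> c u xs \<and> xs 0 = x + \<tau> *\<^sub>R v \<and> xs 1 = x}"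

definition Psi :: "(real^'n \<Rightarrow> real^'n \<Rightarrow> real) \<Rightarrow> real \<Rightarrow> real \<Rightarrow> (real^'n \<Rightarrow> real) \<Rightarrow> nat
                   \<Rightarrow> ((real^'n) \<times> (real^'n)) set \<Rightarrow> ((real^'n) \<times> (real^'n)) set" where
  "Psi H \<tau> c u n S = {(xs (Suc n), (1 / \<tau>) *\<^sub>R (xs n - xs (Suc n))) | xs x v.
        (x, v) \<in> S \<and> calibrated H \<tau> c u xs \<and> xs 0 = x + \<tau> *\<^sub>R v \<and> xs 1 = x}"

text \<open>Lift of the discrete Aubry set to real^'n x real^'n (Z^d-invariant in x).\<close>
definition Aubry_lift :: "(real^'n \<Rightarrow> real^'n \<Rightarrow> real) \<Rightarrow> real \<Rightarrow> real \<Rightarrow> (real^'n \<Rightarrow> real) \<Rightarrow> ((real^'n) \<times> (real^'n)) set" where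
  "Aubry_lift H \<tau> c u = (\<Inter>n. Psi H \<tau> c u n (Sigma_set H \<tau> c u))"

text \<open>Embedding of T^d (as product of circles) and the projection T^d x R^d.\<close>
definition torus_proj :: "real^'n \<Rightarrow> complex^'n" where
  "torus_proj x = (\<chi> i. cis (2 * pi * x $ i))"

definition proj :: "(real^'n) \<times> (real^'n) \<Rightarrow> (complex^'n) \<times> (real^'n)" where
  "proj z = (torus_proj (fst z), snd z)"

definition Aubry_set :: "(real^'n \<Rightarrow> real^'n \<Rightarrow> real) \<Rightarrow> real \<Rightarrow> real \<Rightarrow> (real^'n \<Rightarrow> real) \<Rightarrow> ((complex^'n) \<times> (real^'n)) set" where
  "Aubry_set H \<tau> c u = proj ` Aubry_lift H \<tau> c u"

text \<open>Measures: probability measures on real^'n x real^'n, understood through their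
  push-forward to T^d x R^d (all integrands are periodic in x).\<close>

definition holonomic :: "real \<Rightarrow> ((real^'n) \<times> (real^'n)) measure \<Rightarrow> bool" where
  "holonomic \<tau> \<mu> \<longleftrightarrow> (\<forall>\<phi> :: real^'n \<Rightarrow> real. continuous_on UNIV \<phi> \<and> periodic \<phi> \<longrightarrow>
      integral\<^sup>L \<mu> (\<lambda>(x, v). \<phi> (x + \<tau> *\<^sub>R v) - \<phi> x) = 0)"

definition action :: "(real^'n \<Rightarrow> real^'n \<Rightarrow> real) \<Rightarrow> real \<Rightarrow> ((real^'n) \<times> (real^'n)) measure \<Rightarrow> real" where
  "action H \<tau> \<mu> = integral\<^sup>L \<mu> (\<lambda>(x, v). Lcal H \<tau> x (x + \<tau> *\<^sub>R v))"

definition admissible :: "(real^'n \<Rightarrow> real^'n \<Rightarrow> real) \<Rightarrow> real \<Rightarrow> ((real^'n) \<times> (real^'n)) measure \<Rightarrow> bool" where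
  "admissible H \<tau> \<mu> \<longleftrightarrow> prob_space \<mu> \<and> sets \<mu> = sets borel \<and> holonomic \<tau> \<mu> \<and>
      integrable \<mu> (\<lambda>(x, v). Lcal H \<tau> x (x + \<tau> *\<^sub>R v))"

definition mather_measure :: "(real^'n \<Rightarrow> real^'n \<Rightarrow> real) \<Rightarrow> real \<Rightarrow> ((real^'n) \<times> (real^'n)) measure \<Rightarrow> bool" where
  "mather_measure H \<tau> \<mu> \<longleftrightarrow> admissible H \<tau> \<mu> \<and>
      (\<forall>\<nu>. admissible H \<tau> \<nu> \<longrightarrow> action H \<tau> \<mu> \<le> action H \<tau> \<nu>)"

definition measure_support :: "'a::topological_space measure \<Rightarrow> 'a set" where
  "measure_support M = {z. \<forall>U. open U \<longrightarrow> z \<in> U \<longrightarrow> emeasure M U \<noteq> 0}"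

definition Mather_set :: "(real^'n \<Rightarrow> real^'n \<Rightarrow> real) \<Rightarrow> real \<Rightarrow> ((complex^'n) \<times> (real^'n)) set" where
  "Mather_set H \<tau> = closure (\<Union>{measure_support (distr \<mu> borel proj) | \<mu>. mather_measure H \<tau> \<mu>})"

end

theory Submission
  imports Defs
begin

text \<open>
  Call \<open>(x, v)\<close> a calibrated pair if the step from \<open>x\<close> to \<open>x + \<tau> v\<close> realises the infimum in the
  discrete Lax--Oleinik equation. By coercivity of the Lagrangian and boundedness of \<open>u\<close> these pairs
  form a closed, \<open>\<int>\<^sup>d\<close>-invariant set with bounded velocities, whose image in the torus is therefore
  compact; the Aubry set is a closed invariant subset of it.

  Integrating \<open>u y + \<tau> c \<le> u x + L\<^sub>\<tau> x y\<close> against a holonomic measure shows that every admissible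
  measure has action at least \<open>\<tau> c\<close>, with equality exactly for the measures carried by calibrated
  pairs. Such measures exist: coding the bounded orbit of a calibrated configuration into a real
  sequence through the Cantor set, Helly's selection theorem gives a weak limit of its empirical
  measures, which is holonomic because coboundaries telescope. So the Mather measures are exactly
  these measures and the Mather set is a nonempty closed subset of a compact set. Finally,
  holonomy makes the support of a Mather measure invariant, forwards and backwards, under the step
  \<open>(x, v) \<mapsto> x + \<tau> v\<close> on the torus; hence every point of the support lies on calibrated
  configurations of every length, that is, in the Aubry set.
\<close>

section \<open>Integer translations and the torus\<close>

definition floor_vec :: "real^'n \<Rightarrow> real^'n" where
  "floor_vec x = (\<chi> i. of_int \<lfloor>x $ i\<rfloor>)"

lemma int_vec_floor_vec: "int_vec (floor_vec x)"
  by (simp add: int_vec_def floor_vec_def)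

lemma int_vec_uminus: "int_vec z \<Longrightarrow> int_vec (- z)"
  by (simp add: int_vec_def)

lemma diff_floor_vec_component: "0 \<le> (x - floor_vec x) $ i" "(x - floor_vec x) $ i < 1"
  using frac_lt_1[of "x $ i"] frac_ge_0[of "x $ i"] by (simp_all add: floor_vec_def frac_def)

lemma diff_floor_vec_in_cbox: "x - floor_vec x \<in> cbox 0 1"
  using diff_floor_vec_component[of x] by (auto simp: mem_box_cart less_imp_le)

lemma periodic_add: "periodic f \<Longrightarrow> int_vec z \<Longrightarrow> f (x + z) = f x"
  by (simp add: periodic_def)

lemma periodic_diff: "periodic f \<Longrightarrow> int_vec z \<Longrightarrow> f (x - z) = f x"
  by (metis periodic_add int_vec_uminus diff_conv_add_uminus)

lemma periodic_bounded_on_compact: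
  fixes f :: "real^'n \<Rightarrow> 'b::metric_space \<Rightarrow> 'c::real_normed_vector"
  assumes cont: "continuous_on UNIV (\<lambda>z. f (fst z) (snd z))"
    and per: "\<And>p. periodic (\<lambda>x. f x p)" and K: "compact K"
  obtains B where "\<And>x p. p \<in> K \<Longrightarrow> norm (f x p) \<le> B"
proof -
  have "compact ((\<lambda>z. f (fst z) (snd z)) ` (cbox 0 1 \<times> K))"
    by (intro compact_continuous_image continuous_on_subset[OF cont] compact_Times K) auto
  then obtain B where B: "\<And>w. w \<in> (\<lambda>z. f (fst z) (snd z)) ` (cbox 0 1 \<times> K) \<Longrightarrow> norm w \<le> B"
    using compact_imp_bounded bounded_iff by metis
  have "norm (f x p) \<le> B" if "p \<in> K" for x p
  proof -
    have "f x p = f (x - floor_vec x) p"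
      using periodic_diff[OF per int_vec_floor_vec] by simp
    also have "norm \<dots> \<le> B"
      using B[of "f (x - floor_vec x) p"] diff_floor_vec_in_cbox[of x] that by force
    finally show ?thesis .
  qed
  then show ?thesis using that by blast
qed

lemma periodic_bounded:
  fixes f :: "real^'n \<Rightarrow> real"
  assumes "continuous_on UNIV f" "periodic f"
  obtains B where "\<And>x. \<bar>f x\<bar> \<le> B"
proof -
  obtain B where "\<And>x p. p \<in> {0::real} \<Longrightarrow> norm (f x) \<le> B"
    by (rule periodic_bounded_on_compact[where f="\<lambda>x p. f x" and K="{0::real}"])
       (auto intro!: continuous_on_compose2[OF assms(1)] continuous_intros simp: assms(2))
  then have "\<bar>f x\<bar> \<le> B" for x by simp
  then show ?thesis by (rule that)
qed

lemma torus_proj_add: "torus_proj (x + y) = torus_proj x * torus_proj y"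
  by (simp add: torus_proj_def vec_eq_iff cis_mult distrib_left)

lemma torus_proj_0: "torus_proj 0 = 1"
  by (simp add: torus_proj_def vec_eq_iff)

lemma torus_proj_eq_iff: "torus_proj x = torus_proj y \<longleftrightarrow> int_vec (y - x)"
proof -
  have "cis (2 * pi * a) = cis (2 * pi * b) \<longleftrightarrow> b - a \<in> \<int>" for a b
  proof -
    have "cis (2 * pi * a) = cis (2 * pi * b) \<longleftrightarrow> cis (2 * pi * (b - a)) = 1"
      by (auto simp: right_diff_distrib cis_divide[symmetric] field_simps)
    also have "\<dots> \<longleftrightarrow> (\<exists>n::int. b - a = of_int n)"
      by (simp add: cis_conv_exp exp_eq_1 mult.commute) (metis left_diff_distrib mult_cancel_right zero_neq_numeral)
    also have "\<dots> \<longleftrightarrow> b - a \<in> \<int>"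
      by (auto simp: Ints_def)
    finally show ?thesis .
  qed
  then show ?thesis by (simp add: torus_proj_def vec_eq_iff int_vec_def)
qed

lemma torus_proj_add_int_vec: "int_vec z \<Longrightarrow> torus_proj (x + z) = torus_proj x"
  by (simp add: torus_proj_eq_iff int_vec_uminus)

lemma continuous_on_torus_proj: "continuous_on UNIV torus_proj"
  unfolding torus_proj_def by (intro continuous_on_vec_lambda continuous_intros)

lemma continuous_on_proj: "continuous_on UNIV proj"
  unfolding proj_def by (intro continuous_intros continuous_on_compose2[OF continuous_on_torus_proj]) auto

definition int_translation_invariant :: "((real^'n) \<times> 'b) set \<Rightarrow> bool" where
  "int_translation_invariant A \<longleftrightarrow> (\<forall>x v z. (x, v) \<in> A \<longrightarrow> int_vec z \<longrightarrow> (x + z, v) \<in> A)"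

lemma mem_of_proj_mem:
  assumes "int_translation_invariant A" "proj w \<in> proj ` A"
  shows "w \<in> A"
proof -
  obtain x v y where w: "w = (y, v)" and "(x, v) \<in> A" "torus_proj x = torus_proj y"
    using assms(2) by (cases w) (auto simp: proj_def)
  then have "(x + (y - x), v) \<in> A"
    using assms(1) unfolding int_translation_invariant_def torus_proj_eq_iff by blast
  then show ?thesis by (simp add: w)
qed

lemma compact_proj_image:
  assumes "int_translation_invariant A" "closed A" "\<And>x v. (x, v) \<in> A \<Longrightarrow> norm v \<le> R"
  shows "compact (proj ` A)"
proof -
  have "proj ` A = proj ` (A \<inter> (cbox 0 1 \<times> cball 0 R))"
  proof (intro equalityI subsetI)
    fix w assume "w \<in> proj ` A"
    then obtain x v where xv: "(x, v) \<in> A" "w = proj (x, v)" by auto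
    have "(x + - floor_vec x, v) \<in> A"
      using assms(1) xv(1) int_vec_uminus[OF int_vec_floor_vec]
      unfolding int_translation_invariant_def by blast
    moreover have "proj (x - floor_vec x, v) = w"
      using xv(2) torus_proj_add_int_vec[OF int_vec_uminus[OF int_vec_floor_vec]]
      by (simp add: proj_def)
    ultimately show "w \<in> proj ` (A \<inter> (cbox 0 1 \<times> cball 0 R))"
      using diff_floor_vec_in_cbox assms(3) by force
  qed auto
  moreover have "compact (A \<inter> (cbox 0 1 \<times> cball 0 R))"
    by (intro closed_Int_compact assms compact_Times compact_cbox compact_cball)
  ultimately show ?thesis
    by (metis compact_continuous_image continuous_on_subset[OF continuous_on_proj] subset_UNIV)
qed

section \<open>Borel measures and their supports\<close>

lemma measurable_sets_borel: "sets M = sets borel \<Longrightarrow> f \<in> borel \<rightarrow>\<^sub>M N \<Longrightarrow> f \<in> M \<rightarrow>\<^sub>M N"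
  using measurable_cong_sets[of M borel N N] by simp

lemma integrable_bounded_continuous:
  fixes f :: "'a::topological_space \<Rightarrow> real"
  assumes "finite_measure M" "sets M = sets borel" "continuous_on UNIV f" "\<And>x. \<bar>f x\<bar> \<le> B"
  shows "integrable M f"
proof (rule finite_measure.integrable_const_bound[OF assms(1), where B=B])
  show "f \<in> borel_measurable M"
    by (rule measurable_sets_borel[OF assms(2) borel_measurable_continuous_onI[OF assms(3)]])
qed (use assms(4) in auto)

lemma closed_measure_support: "closed (measure_support M)"
  unfolding closed_def open_subopen[of "- measure_support M"]
  by (auto simp: measure_support_def)

lemma AE_mem_measure_support:
  fixes M :: "'a::second_countable_topology measure"
  assumes sets: "sets M = sets borel"
  shows "AE w in M. w \<in> measure_support M"
proof -
  obtain B :: "'a set set" where B: "countable B" "topological_basis B"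
    using ex_countable_basis by blast
  define N where "N = (\<Union>b\<in>{b \<in> B. emeasure M b = 0}. b)"
  have "N \<in> null_sets M"
    unfolding N_def
  proof (rule null_sets_UN')
    show "countable {b \<in> B. emeasure M b = 0}"
      using B(1) by (rule countable_subset[rotated]) auto
  qed (use topological_basis_open[OF B(2)] sets in \<open>auto simp: null_sets_def borel_open\<close>)
  moreover have "{w \<in> space M. w \<notin> measure_support M} \<subseteq> N"
  proof
    fix w assume "w \<in> {w \<in> space M. w \<notin> measure_support M}"
    then obtain U where U: "open U" "w \<in> U" "emeasure M U = 0"
      by (auto simp: measure_support_def)
    then obtain b where b: "b \<in> B" "w \<in> b" "b \<subseteq> U"
      using topological_basisE[OF B(2)] by metis
    have "emeasure M b \<le> emeasure M U"
      by (rule emeasure_mono[OF b(3)]) (use U sets in \<open>simp add: borel_open\<close>)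
    then show "w \<in> N"
      using U b unfolding N_def by auto
  qed
  ultimately show ?thesis by (rule AE_I')
qed

lemma emeasure_open_eq_0_if_AE_notin:
  assumes "sets M = sets borel" "open U" "AE w in M. w \<notin> U"
  shows "emeasure M U = 0"
proof -
  have "{w \<in> space M. \<not> w \<notin> U} = U"
    using sets_eq_imp_space_eq[OF assms(1)] by auto
  then show ?thesis
    using AE_iff_measurable[of U M "\<lambda>w. w \<notin> U"] assms by (simp add: borel_open)
qed

lemma measure_support_subset_closed:
  assumes "sets M = sets borel" "closed C" "AE w in M. w \<in> C"
  shows "measure_support M \<subseteq> C"
  using emeasure_open_eq_0_if_AE_notin[OF assms(1), of "- C"] assms(2,3)
  by (auto simp: measure_support_def open_Compl)

lemma measure_support_nonempty:
  fixes M :: "'a::second_countable_topology measure"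
  assumes "prob_space M" "sets M = sets borel"
  shows "measure_support M \<noteq> {}"
  using AE_mem_measure_support[OF assms(2)] prob_space.AE_False[OF assms(1)] by auto

lemma continuous_vanishes_on_measure_support:
  fixes h :: "'a::second_countable_topology \<Rightarrow> real"
  assumes "prob_space M" "sets M = sets borel" "continuous_on UNIV h"
    and "\<And>w. 0 \<le> h w" "\<And>w. h w \<le> B" "integral\<^sup>L M h = 0"
    and "w \<in> measure_support M"
  shows "h w = 0"
proof (rule ccontr)
  assume "h w \<noteq> 0"
  then have w: "w \<in> {x. 0 < h x}"
    using assms(4)[of w] by simp
  have "\<bar>h x\<bar> \<le> B" for x
    using assms(4,5)[of x] by simp
  then have "integrable M h"
    by (rule integrable_bounded_continuous[OF prob_space.finite_measure[OF assms(1)] assms(2,3)])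
  then have "AE x in M. h x = 0"
    using integral_nonneg_eq_0_iff_AE[of M h] assms(4,6) by simp
  then have "AE x in M. x \<notin> {x. 0 < h x}"
    by auto
  moreover have U: "open {x. 0 < h x}"
    using open_Collect_less[OF continuous_on_const assms(3)] by simp
  ultimately have "emeasure M {x. 0 < h x} = 0"
    by (intro emeasure_open_eq_0_if_AE_notin[OF assms(2)])
  with U w assms(7) show False
    unfolding measure_support_def by blast
qed

text \<open>If \<open>F\<close> and \<open>G\<close> push \<open>M\<close> forward to the same measure, then \<open>F\<close> maps the support of \<open>M\<close>
  into the image of the support under \<open>G\<close>: otherwise the distance to that image would be a test
  function integrating to zero against \<open>G\<close> but not against \<open>F\<close>.\<close>
lemma image_measure_support_subset:
  fixes F G :: "'a::{second_countable_topology, metric_space} \<Rightarrow> 'b::metric_space"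
  assumes M: "prob_space M" "sets M = sets borel" "compact (measure_support M)"
    and cont: "continuous_on UNIV F" "continuous_on UNIV G"
    and eq: "\<And>g :: 'b \<Rightarrow> real. continuous_on UNIV g \<Longrightarrow>
               integral\<^sup>L M (\<lambda>w. g (F w)) = integral\<^sup>L M (\<lambda>w. g (G w))"
  shows "F ` measure_support M \<subseteq> G ` measure_support M"
proof
  fix w' assume "w' \<in> F ` measure_support M"
  then obtain w where w: "w \<in> measure_support M" "w' = F w" by blast
  define A where "A = G ` measure_support M"
  have "compact A"
    unfolding A_def by (rule compact_continuous_image[OF continuous_on_subset[OF cont(2)] M(3)]) simp
  then have A: "closed A" "A \<noteq> {}"
    using w(1) by (auto simp: A_def compact_imp_closed)
  define g where "g \<zeta> = min 1 (infdist \<zeta> A)" for \<zeta>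
  have g: "continuous_on UNIV g"
    unfolding g_def by (intro continuous_intros continuous_on_infdist continuous_on_id)
  have "AE w in M. g (G w) = 0"
    using AE_mem_measure_support[OF M(2)] by eventually_elim (simp add: g_def A_def)
  then have "integral\<^sup>L M (\<lambda>w. g (G w)) = 0"
    by (rule integral_eq_zero_AE)
  then have "integral\<^sup>L M (\<lambda>w. g (F w)) = 0"
    using eq[OF g] by simp
  moreover have "continuous_on UNIV (\<lambda>w. g (F w))"
    by (rule continuous_on_compose2[OF g cont(1)]) simp
  moreover have "0 \<le> g \<zeta>" "g \<zeta> \<le> 1" for \<zeta>
    by (simp_all add: g_def infdist_nonneg)
  ultimately have "g (F w) = 0"
    using continuous_vanishes_on_measure_support[OF M(1,2), of "\<lambda>w. g (F w)" 1 w] w(1) by blast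
  then have "infdist (F w) A = 0"
    by (simp add: g_def min_def split: if_splits)
  then show "w' \<in> G ` measure_support M"
    using in_closed_iff_infdist_zero[OF A] w(2) by (simp add: A_def)
qed

lemma measurable_proj: "sets \<mu> = sets borel \<Longrightarrow> proj \<in> \<mu> \<rightarrow>\<^sub>M borel"
  by (rule measurable_sets_borel[OF _ borel_measurable_continuous_onI[OF continuous_on_proj]])

lemma prob_space_distr_proj:
  "prob_space \<mu> \<Longrightarrow> sets \<mu> = sets borel \<Longrightarrow> prob_space (distr \<mu> borel proj)"
  by (rule prob_space.prob_space_distr[OF _ measurable_proj])

lemma holonomic_integral_shift:
  fixes \<phi> :: "real^'n \<Rightarrow> real"
  assumes \<mu>: "prob_space \<mu>" "sets \<mu> = sets borel" "holonomic \<tau> \<mu>"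
    and \<phi>: "continuous_on UNIV \<phi>" "periodic \<phi>"
  shows "integral\<^sup>L \<mu> (\<lambda>z. \<phi> (fst z + \<tau> *\<^sub>R snd z)) = integral\<^sup>L \<mu> (\<lambda>z. \<phi> (fst z))"
proof -
  obtain B where B: "\<And>x. \<bar>\<phi> x\<bar> \<le> B"
    using periodic_bounded[OF \<phi>] by metis
  have fin: "finite_measure \<mu>"
    using \<mu>(1) by (rule prob_space.finite_measure)
  have "integrable \<mu> (\<lambda>z. \<phi> (fst z + \<tau> *\<^sub>R snd z))" "integrable \<mu> (\<lambda>z. \<phi> (fst z))"
    using B by (auto intro!: integrable_bounded_continuous[OF fin \<mu>(2)] continuous_intros
        continuous_on_compose2[OF \<phi>(1)])
  moreover have "integral\<^sup>L \<mu> (\<lambda>z. \<phi> (fst z + \<tau> *\<^sub>R snd z) - \<phi> (fst z)) = 0"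
    using \<mu>(3) \<phi> by (simp add: holonomic_def case_prod_beta')
  ultimately show ?thesis by simp
qed

section \<open>Limits of empirical measures of bounded sequences\<close>

definition binary_digit :: "nat \<Rightarrow> real \<Rightarrow> bool" where
  "binary_digit i a \<longleftrightarrow> odd \<lfloor>2 ^ Suc i * a\<rfloor>"

lemma floor_double: "\<lfloor>2 * x\<rfloor> = 2 * \<lfloor>x\<rfloor> + (if odd \<lfloor>2 * x\<rfloor> then 1 else 0)" for x :: real
proof -
  have "2 * \<lfloor>x\<rfloor> \<le> \<lfloor>2 * x\<rfloor>"
    by (simp add: le_floor_iff)
  moreover have "2 * x < 2 * real_of_int \<lfloor>x\<rfloor> + 2"
    using floor_correct[of x] by linarith
  then have "\<lfloor>2 * x\<rfloor> < 2 * \<lfloor>x\<rfloor> + 2"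
    by (simp add: floor_less_iff)
  ultimately show ?thesis by presburger
qed

lemma floor_pow2_eq_if_binary_digits_eq:
  assumes "\<And>i. i < N \<Longrightarrow> binary_digit i a = binary_digit i b" "\<lfloor>a\<rfloor> = \<lfloor>b\<rfloor>"
  shows "\<lfloor>2 ^ N * a\<rfloor> = \<lfloor>2 ^ N * b\<rfloor>"
  using assms(1)
proof (induction N)
  case (Suc N)
  have "\<lfloor>2 ^ Suc N * a\<rfloor> = 2 * \<lfloor>2 ^ N * a\<rfloor> + (if binary_digit N a then 1 else 0)"
    using floor_double[of "2 ^ N * a"] by (simp add: binary_digit_def mult.assoc)
  also have "\<dots> = 2 * \<lfloor>2 ^ N * b\<rfloor> + (if binary_digit N b then 1 else 0)"
    using Suc by simp
  also have "\<dots> = \<lfloor>2 ^ Suc N * b\<rfloor>"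
    using floor_double[of "2 ^ N * b"] by (simp add: binary_digit_def mult.assoc)
  finally show ?case .
qed (use assms(2) in simp)

lemma dist_lt_if_binary_digits_eq:
  assumes "a \<in> {0..<1}" "b \<in> {0..<1}" "\<And>i. i < N \<Longrightarrow> binary_digit i a = binary_digit i b"
  shows "\<bar>a - b\<bar> < 1 / 2 ^ N"
proof -
  have "\<lfloor>a\<rfloor> = 0" "\<lfloor>b\<rfloor> = 0"
    using assms(1,2) by (simp_all add: floor_eq_iff)
  then have "\<lfloor>a\<rfloor> = \<lfloor>b\<rfloor>"
    by simp
  then have "\<lfloor>2 ^ N * a\<rfloor> = \<lfloor>2 ^ N * b\<rfloor>"
    using floor_pow2_eq_if_binary_digits_eq assms(3) by metis
  then have "\<bar>2 ^ N * a - 2 ^ N * b\<bar> < 1"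
    using floor_correct[of "2 ^ N * a"] floor_correct[of "2 ^ N * b"] by linarith
  then have "2 ^ N * \<bar>a - b\<bar> < 1"
    by (simp add: abs_mult right_diff_distrib[symmetric])
  then show ?thesis
    by (simp add: field_simps)
qed

text \<open>The point of the middle-thirds Cantor set with ternary digits \<open>2 \<omega> m\<close>. As no digit is \<open>1\<close>, the first
  digit in which two such points differ bounds their distance from below.\<close>
definition cantor_real :: "(nat \<Rightarrow> bool) \<Rightarrow> real" where
  "cantor_real \<omega> = (\<Sum>m. (if \<omega> m then 2 else 0) / 3 ^ Suc m)"

lemma sums_two_thirds_geometric: "(\<lambda>m. 2 / 3 ^ Suc m :: real) sums 1"
proof -
  have "(\<lambda>m. (2/3) * (1/3::real) ^ m) sums ((2/3) * (1 / (1 - 1/3)))"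
    by (intro sums_mult geometric_sums) simp
  then show ?thesis by (simp add: power_one_over field_simps)
qed

lemma summable_cantor_digits: "summable (\<lambda>m. (if \<omega> m then 2 else 0) / 3 ^ Suc m :: real)"
  by (rule summable_comparison_test'[OF sums_summable[OF sums_two_thirds_geometric], of 0]) simp

lemma cantor_real_bounds: "0 \<le> cantor_real \<omega>" "cantor_real \<omega> \<le> 1"
proof -
  show "0 \<le> cantor_real \<omega>"
    unfolding cantor_real_def by (rule suminf_nonneg[OF summable_cantor_digits]) simp
  have "cantor_real \<omega> \<le> (\<Sum>m. 2 / 3 ^ Suc m :: real)"
    unfolding cantor_real_def
    by (rule suminf_le[OF _ summable_cantor_digits sums_summable[OF sums_two_thirds_geometric]]) simp
  then show "cantor_real \<omega> \<le> 1"
    using sums_unique[OF sums_two_thirds_geometric] by simp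
qed

lemma cantor_real_dist_ge:
  assumes before: "\<And>k. k < m \<Longrightarrow> \<omega> k = \<omega>' k" and "\<omega> m \<noteq> \<omega>' m"
  shows "1 / 3 ^ Suc m \<le> \<bar>cantor_real \<omega> - cantor_real \<omega>'\<bar>"
proof -
  define d :: "nat \<Rightarrow> real"
    where "d k = (if \<omega> k then 2 else 0) / 3 ^ Suc k - (if \<omega>' k then 2 else 0) / 3 ^ Suc k" for k
  have d: "summable d" "cantor_real \<omega> - cantor_real \<omega>' = suminf d"
    unfolding d_def cantor_real_def
    by (intro summable_diff summable_cantor_digits)
      (rule suminf_diff[OF summable_cantor_digits summable_cantor_digits])
  have "sum d {..<m} = 0"
    by (rule sum.neutral) (auto simp: d_def before)
  then have "suminf d = d m + (\<Sum>n. d (Suc n + m))"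
    using suminf_split_initial_segment[OF d(1), of m]
      suminf_split_head[OF summable_ignore_initial_segment[OF d(1), of m]] by simp
  moreover have "\<bar>d m\<bar> = 2 / 3 ^ Suc m"
    using assms(2) by (auto simp: d_def)
  moreover have "\<bar>\<Sum>n. d (Suc n + m)\<bar> \<le> 1 / 3 ^ Suc m"
  proof -
    have tail: "(\<lambda>n. 2 / 3 ^ Suc (Suc n + m) :: real) sums (1 / 3 ^ Suc m)"
      using sums_mult[OF sums_two_thirds_geometric, of "1 / 3 ^ Suc m"]
      by (simp add: power_add field_simps)
    have "norm (\<Sum>n. d (Suc n + m)) \<le> (\<Sum>n. 2 / 3 ^ Suc (Suc n + m))"
      by (rule norm_suminf_le[OF _ sums_summable[OF tail]]) (auto simp: d_def)
    then show ?thesis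
      using sums_unique[OF tail] by simp
  qed
  ultimately show ?thesis
    using d(2) by linarith
qed

lemma cantor_digits_eq_if_close:
  assumes close: "\<bar>cantor_real \<omega> - cantor_real \<omega>'\<bar> < 1 / 3 ^ Suc M" and "m \<le> M"
  shows "\<omega> m = \<omega>' m"
proof (rule ccontr)
  assume "\<omega> m \<noteq> \<omega>' m"
  define m0 where "m0 = (LEAST m. \<omega> m \<noteq> \<omega>' m)"
  have m0: "\<omega> m0 \<noteq> \<omega>' m0" "m0 \<le> M"
    using LeastI[of "\<lambda>m. \<omega> m \<noteq> \<omega>' m"] Least_le[of "\<lambda>m. \<omega> m \<noteq> \<omega>' m"] \<open>\<omega> m \<noteq> \<omega>' m\<close> \<open>m \<le> M\<close>
    unfolding m0_def by fastforce+
  have "\<omega> k = \<omega>' k" if "k < m0" for k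
    using not_less_Least[of k "\<lambda>m. \<omega> m \<noteq> \<omega>' m"] that unfolding m0_def by blast
  then have "1 / 3 ^ Suc m0 \<le> \<bar>cantor_real \<omega> - cantor_real \<omega>'\<bar>"
    using cantor_real_dist_ge m0(1) by blast
  moreover have "1 / 3 ^ Suc M \<le> (1 / 3 ^ Suc m0 :: real)"
    using m0(2) by (intro divide_left_mono power_increasing) auto
  ultimately show False
    using close by linarith
qed

lemma dist_le_if_inner_Basis_le:
  fixes x y :: "'a::euclidean_space" and \<delta> :: real
  assumes "\<And>b. b \<in> Basis \<Longrightarrow> \<bar>(x - y) \<bullet> b\<bar> \<le> \<delta>"
  shows "dist x y \<le> DIM('a) * \<delta>"
proof -
  have "dist x y \<le> (\<Sum>b\<in>Basis. \<bar>(x - y) \<bullet> b\<bar>)"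
    using norm_le_l1[of "x - y"] by (simp add: dist_norm)
  also have "\<dots> \<le> DIM('a) * \<delta>"
    using sum_bounded_above[of Basis "\<lambda>b. \<bar>(x - y) \<bullet> b\<bar>" \<delta>] assms by simp
  finally show ?thesis .
qed

lemma continuous_extension_of_sequence:
  fixes t :: "nat \<Rightarrow> real" and z :: "nat \<Rightarrow> 'a::euclidean_space"
  assumes uc: "\<And>e. 0 < e \<Longrightarrow> \<exists>d>0. \<forall>k l. dist (t k) (t l) < d \<longrightarrow> dist (z k) (z l) < e"
  obtains G where "continuous_on UNIV G" "\<And>k. G (t k) = z k"
proof -
  have z_eq: "z k = z l" if "t k = t l" for k l
  proof (rule ccontr)
    assume "z k \<noteq> z l"
    then obtain d where "d > 0" "\<forall>k' l'. dist (t k') (t l') < d \<longrightarrow> dist (z k') (z l') < dist (z k) (z l)"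
      using uc[of "dist (z k) (z l)"] by auto
    then have "dist (t k) (t l) < d \<longrightarrow> dist (z k) (z l) < dist (z k) (z l)"
      by blast
    then show False
      using \<open>d > 0\<close> that by simp
  qed
  define g where "g s = z (SOME k. t k = s)" for s
  have g: "g (t k) = z k" for k
    using z_eq[OF someI[of "\<lambda>k'. t k' = t k" k]] by (simp add: g_def)
  have "uniformly_continuous_on (range t) g"
    unfolding uniformly_continuous_on_def
  proof (intro allI impI)
    fix e :: real assume "0 < e"
    then obtain d where "d > 0" "\<And>k l. dist (t k) (t l) < d \<Longrightarrow> dist (z k) (z l) < e"
      using uc by blast
    then show "\<exists>d>0. \<forall>s\<in>range t. \<forall>s'\<in>range t. dist s' s < d \<longrightarrow> dist (g s') (g s) < e"
      by (auto simp: g)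
  qed
  then obtain g' where g': "uniformly_continuous_on (closure (range t)) g'"
    "\<And>s. s \<in> range t \<Longrightarrow> g s = g' s"
    by (rule uniformly_continuous_on_extension_on_closure) blast
  have "closedin (top_of_set UNIV) (closure (range t))"
    by (simp add: closed_closedin[symmetric])
  then obtain G where G: "continuous_on UNIV G" "\<And>s. s \<in> closure (range t) \<Longrightarrow> G s = g' s"
    using Dugundji[OF convex_UNIV UNIV_not_empty _ uniformly_continuous_imp_continuous[OF g'(1)] subset_UNIV]
    by metis
  have "G (t k) = z k" for k
    using G(2)[OF closure_subset[THEN subsetD, OF rangeI[of t k]]] g'(2)[OF rangeI[of t k]] g[of k]
    by simp
  with G(1) show ?thesis by (rule that)
qed

text \<open>On the half-open unit cube close codes share their leading digits, so the
  decoding is uniformly continuous.\<close>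
definition cantor_code :: "'a::euclidean_space \<Rightarrow> real" where
  "cantor_code x =
    cantor_real (\<lambda>m. case prod_decode m of (j, i) \<Rightarrow> binary_digit i (x \<bullet> from_nat_into Basis j))"

lemma cantor_code_bounds: "cantor_code x \<in> {0..1}"
  using cantor_real_bounds by (simp add: cantor_code_def)

lemma binary_digit_eq_if_cantor_code_close:
  assumes "b \<in> Basis" "\<bar>cantor_code x - cantor_code y\<bar> < 1 / 3 ^ Suc M"
    and "prod_encode (to_nat_on Basis b, i) \<le> M"
  shows "binary_digit i (x \<bullet> b) = binary_digit i (y \<bullet> b)"
  using cantor_digits_eq_if_close[OF assms(2)[unfolded cantor_code_def] assms(3)] assms(1)
  by (simp add: countable_finite)

lemma dist_lt_if_cantor_code_close:
  assumes "0 < e"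
  obtains d where "0 < d"
    "\<And>x y :: 'a::euclidean_space. (\<And>b. b \<in> Basis \<Longrightarrow> x \<bullet> b \<in> {0..<1}) \<Longrightarrow>
      (\<And>b. b \<in> Basis \<Longrightarrow> y \<bullet> b \<in> {0..<1}) \<Longrightarrow> \<bar>cantor_code x - cantor_code y\<bar> < d \<Longrightarrow> dist x y < e"
proof -
  obtain N where N: "(1/2::real) ^ N < e / DIM('a)"
    using real_arch_pow_inv[of "e / DIM('a)" "1/2"] assms by auto
  have "finite ((\<lambda>(b, i). prod_encode (to_nat_on Basis b, i)) ` ((Basis :: 'a set) \<times> {..<N}))"
    by simp
  then obtain M where "\<forall>m\<in>(\<lambda>(b, i). prod_encode (to_nat_on Basis b, i)) ` ((Basis :: 'a set) \<times> {..<N}). m \<le> M"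
    unfolding finite_nat_set_iff_bounded_le by blast
  then have M: "prod_encode (to_nat_on Basis b, i) \<le> M" if "b \<in> Basis" "i < N" for b :: 'a and i
    using that by fastforce
  have "dist x y < e"
    if x: "\<And>b. b \<in> Basis \<Longrightarrow> x \<bullet> b \<in> {0..<1}" and y: "\<And>b. b \<in> Basis \<Longrightarrow> y \<bullet> b \<in> {0..<1}"
      and close: "\<bar>cantor_code x - cantor_code y\<bar> < 1 / 3 ^ Suc M" for x y :: 'a
  proof -
    have "\<bar>(x - y) \<bullet> b\<bar> \<le> 1 / 2 ^ N" if b: "b \<in> Basis" for b
    proof -
      have "binary_digit i (x \<bullet> b) = binary_digit i (y \<bullet> b)" if "i < N" for i
        by (rule binary_digit_eq_if_cantor_code_close[OF b close M[OF b that]])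
      then have "\<bar>x \<bullet> b - y \<bullet> b\<bar> < 1 / 2 ^ N"
        by (rule dist_lt_if_binary_digits_eq[OF x[OF b] y[OF b]])
      then show ?thesis
        by (simp add: inner_diff_left)
    qed
    then have "dist x y \<le> DIM('a) * (1 / 2 ^ N)"
      by (rule dist_le_if_inner_Basis_le)
    also have "\<dots> < e"
      using N by (simp add: power_one_over field_simps)
    finally show ?thesis .
  qed
  then show ?thesis
    by (intro that[of "1 / 3 ^ Suc M"]) simp_all
qed

lemma bounded_sequence_rescaled_into_unit_cube:
  fixes z :: "nat \<Rightarrow> 'a::euclidean_space"
  assumes "bounded (range z)"
  obtains w :: "nat \<Rightarrow> 'a" and R where "0 < R" "\<And>k b. b \<in> Basis \<Longrightarrow> w k \<bullet> b \<in> {0..<1}"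
    "\<And>k l. dist (z k) (z l) = R * dist (w k) (w l)"
proof -
  obtain R where R: "0 < R" "\<And>k. norm (z k) < R"
    using assms unfolding bounded_pos_less by blast
  define w where "w k = (1 / (2 * R)) *\<^sub>R (z k + R *\<^sub>R One)" for k
  have "w k \<bullet> b \<in> {0..<1}" if "b \<in> Basis" for b k
  proof -
    have wb: "w k \<bullet> b = (z k \<bullet> b + R) / (2 * R)"
      using that by (simp add: w_def inner_add_left inner_sum_left inner_Basis if_distrib cong: if_cong)
    have "\<bar>z k \<bullet> b\<bar> < R"
      using Basis_le_norm[OF that, of "z k"] R(2)[of k] by linarith
    then have "0 \<le> (z k \<bullet> b + R) / (2 * R)" "(z k \<bullet> b + R) / (2 * R) < 1"
      using R(1) by (simp_all add: abs_less_iff divide_less_eq_1)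
    then show ?thesis
      unfolding wb by simp
  qed
  moreover have "dist (z k) (z l) = 2 * R * dist (w k) (w l)" for k l
  proof -
    have "w k - w l = (1 / (2 * R)) *\<^sub>R (z k - z l)"
      by (simp add: w_def algebra_simps)
    then show ?thesis
      using R(1) by (simp add: dist_norm)
  qed
  moreover have "0 < 2 * R"
    using R(1) by simp
  ultimately show ?thesis
    by (rule that[rotated 1])
qed

lemma bounded_sequence_factorization:
  fixes z :: "nat \<Rightarrow> 'a::euclidean_space"
  assumes "bounded (range z)"
  obtains t :: "nat \<Rightarrow> real" and G where "\<And>k. t k \<in> {0..1}" "continuous_on UNIV G" "\<And>k. G (t k) = z k"
proof -
  obtain w :: "nat \<Rightarrow> 'a" and R where R: "0 < R" and w: "\<And>k b. b \<in> Basis \<Longrightarrow> w k \<bullet> b \<in> {0..<1}"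
    and dist_z: "\<And>k l. dist (z k) (z l) = R * dist (w k) (w l)"
    by (rule bounded_sequence_rescaled_into_unit_cube[OF assms]) blast
  define t where "t k = cantor_code (w k)" for k
  have "\<exists>d>0. \<forall>k l. dist (t k) (t l) < d \<longrightarrow> dist (z k) (z l) < e" if "0 < e" for e
  proof -
    have "0 < e / R"
      using \<open>0 < e\<close> R by simp
    then obtain d where "0 < d" and d: "\<And>x y :: 'a. (\<And>b. b \<in> Basis \<Longrightarrow> x \<bullet> b \<in> {0..<1}) \<Longrightarrow>
        (\<And>b. b \<in> Basis \<Longrightarrow> y \<bullet> b \<in> {0..<1}) \<Longrightarrow> \<bar>cantor_code x - cantor_code y\<bar> < d \<Longrightarrow>
        dist x y < e / R"
      by (rule dist_lt_if_cantor_code_close) blast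
    have "dist (z k) (z l) < e" if "dist (t k) (t l) < d" for k l
      using d[OF w w that[unfolded dist_real_def t_def]] R by (simp add: dist_z field_simps)
    with \<open>0 < d\<close> show ?thesis
      by blast
  qed
  then obtain G where "continuous_on UNIV G" "\<And>k. G (t k) = z k"
    using continuous_extension_of_sequence by blast
  moreover have "t k \<in> {0..1}" for k
    unfolding t_def by (rule cantor_code_bounds)
  ultimately show ?thesis
    by (rule that[rotated])
qed

definition empirical_measure :: "(nat \<Rightarrow> 'a::topological_space) \<Rightarrow> nat \<Rightarrow> 'a measure" where
  "empirical_measure z N = distr (measure_pmf (pmf_of_set {..<Suc N})) borel z"

lemma prob_space_empirical_measure: "prob_space (empirical_measure z N)"
  by (auto simp: empirical_measure_def intro: measure_pmf.prob_space_distr)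

lemma sets_empirical_measure: "sets (empirical_measure z N) = sets borel"
  by (simp add: empirical_measure_def)

lemma integral_empirical_measure:
  assumes "f \<in> borel_measurable borel"
  shows "integral\<^sup>L (empirical_measure z N) f = (\<Sum>k<Suc N. f (z k)) / Suc N"
proof -
  have "integral\<^sup>L (empirical_measure z N) f = measure_pmf.expectation (pmf_of_set {..<Suc N}) (\<lambda>k. f (z k))"
    unfolding empirical_measure_def using assms by (intro integral_distr) simp_all
  also have "\<dots> = (\<Sum>k<Suc N. f (z k)) / card {..<Suc N}"
    by (rule integral_pmf_of_set) auto
  finally show ?thesis
    by (simp only: card_lessThan)
qed

lemma tight_empirical_measure:
  assumes "\<And>k. t k \<in> {0..1}"
  shows "tight (empirical_measure t)"
  unfolding tight_def
proof (intro conjI allI impI)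
  show "real_distribution (empirical_measure t N)" for N
    by (simp add: real_distribution_def real_distribution_axioms_def prob_space_empirical_measure
        sets_empirical_measure)
  fix e :: real assume "0 < e"
  have "t -` {-1<..1} = UNIV"
    using assms by force
  then have "measure (empirical_measure t N) {-1<..1} = 1" for N
    using measure_pmf.prob_space[of "pmf_of_set {..<Suc N}"] by (simp add: empirical_measure_def measure_distr)
  with \<open>0 < e\<close> show "\<exists>a b. a < b \<and> (\<forall>N. 1 - e < measure (empirical_measure t N) {a<..b})"
    by (intro exI[of _ "-1"] exI[of _ 1]) auto
qed

text \<open>Helly's selection theorem is only available for measures on the real line, so the sequence is
  first written as a continuous image of a bounded real sequence.\<close>
lemma empirical_measures_converge:
  fixes z :: "nat \<Rightarrow> 'a::euclidean_space"
  assumes "bounded (range z)"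
  obtains \<mu> r where "strict_mono r" "prob_space \<mu>" "sets \<mu> = sets borel"
    "\<And>f B. continuous_on UNIV f \<Longrightarrow> (\<And>x. \<bar>f x\<bar> \<le> B) \<Longrightarrow>
      (\<lambda>j. (\<Sum>k<Suc (r j). f (z k)) / Suc (r j)) \<longlonglongrightarrow> integral\<^sup>L \<mu> f"
proof -
  obtain t :: "nat \<Rightarrow> real" and G where t: "\<And>k. t k \<in> {0..1}"
    and G: "continuous_on UNIV G" "\<And>k. G (t k) = z k"
    using bounded_sequence_factorization[OF assms] by blast
  have "\<exists>r \<nu>. strict_mono r \<and> real_distribution \<nu> \<and> weak_conv_m (empirical_measure t \<circ> id \<circ> r) \<nu>"
    by (rule tight_imp_convergent_subsubsequence[OF tight_empirical_measure[OF t] strict_mono_id])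
  then obtain r \<nu> where r: "strict_mono r" and \<nu>: "real_distribution \<nu>"
    and weak: "weak_conv_m (empirical_measure t \<circ> id \<circ> r) \<nu>"
    by blast
  have empirical: "real_distribution ((empirical_measure t \<circ> id \<circ> r) j)" for j
    using tight_empirical_measure[OF t] by (simp add: tight_def)
  have sets_\<nu>: "sets \<nu> = sets borel"
    using \<nu> by (simp add: real_distribution_def real_distribution_axioms_def)
  have G_meas: "G \<in> \<nu> \<rightarrow>\<^sub>M borel"
    by (rule measurable_sets_borel[OF sets_\<nu> borel_measurable_continuous_onI[OF G(1)]])
  show ?thesis
  proof (rule that[OF r])
    show "prob_space (distr \<nu> borel G)" "sets (distr \<nu> borel G) = sets borel"
      using \<nu> prob_space.prob_space_distr[OF _ G_meas] by (auto simp: real_distribution_def)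
    fix f :: "'a \<Rightarrow> real" and B assume f: "continuous_on UNIV f" "\<And>x. \<bar>f x\<bar> \<le> B"
    have fG: "continuous_on UNIV (\<lambda>s. f (G s))"
      by (rule continuous_on_compose2[OF f(1) G(1)]) simp
    have "(\<lambda>j. integral\<^sup>L ((empirical_measure t \<circ> id \<circ> r) j) (\<lambda>s. f (G s)))
        \<longlonglongrightarrow> integral\<^sup>L \<nu> (\<lambda>s. f (G s))"
      using fG f(2) continuous_on_eq_continuous_at[of UNIV]
      by (intro weak_conv_imp_integral_bdd_continuous_conv[OF empirical \<nu> weak, where B=B]) auto
    moreover have "integral\<^sup>L \<nu> (\<lambda>s. f (G s)) = integral\<^sup>L (distr \<nu> borel G) f"
      by (rule integral_distr[OF G_meas borel_measurable_continuous_onI[OF f(1)], symmetric])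
    ultimately show "(\<lambda>j. (\<Sum>k<Suc (r j). f (z k)) / Suc (r j)) \<longlonglongrightarrow> integral\<^sup>L (distr \<nu> borel G) f"
      using integral_empirical_measure[OF borel_measurable_continuous_onI[OF fG]] by (simp add: G(2) o_def)
  qed
qed

lemma AE_mem_closed_if_empirical_limit:
  fixes z :: "nat \<Rightarrow> 'a::metric_space"
  assumes \<mu>: "prob_space \<mu>" "sets \<mu> = sets borel" and C: "closed C" "\<And>k. z k \<in> C"
    and lim: "\<And>f B. continuous_on UNIV f \<Longrightarrow> (\<And>x. \<bar>f x\<bar> \<le> B) \<Longrightarrow>
      (\<lambda>j. (\<Sum>k<Suc (r j). f (z k)) / Suc (r j)) \<longlonglongrightarrow> integral\<^sup>L \<mu> f"
  shows "AE x in \<mu>. x \<in> C"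
proof -
  define h where "h x = min 1 (infdist x C)" for x
  have h: "continuous_on UNIV h" "\<And>x. \<bar>h x\<bar> \<le> 1"
    unfolding h_def by (auto intro!: continuous_intros continuous_on_infdist simp: infdist_nonneg)
  have "(\<lambda>j. (\<Sum>k<Suc (r j). h (z k)) / Suc (r j)) = (\<lambda>j. 0)"
    using C(2) by (simp add: h_def)
  then have "integral\<^sup>L \<mu> h = 0"
    using lim[OF h] LIMSEQ_unique[OF _ tendsto_const] by metis
  moreover have "integrable \<mu> h"
    by (rule integrable_bounded_continuous[OF prob_space.finite_measure[OF \<mu>(1)] \<mu>(2) h])
  ultimately have "AE x in \<mu>. h x = 0"
    using integral_nonneg_eq_0_iff_AE[of \<mu> h] by (simp add: h_def infdist_nonneg)
  then show ?thesis
    using in_closed_iff_infdist_zero[OF C(1)] C(2)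
    by (auto simp: h_def min_def split: if_splits elim!: AE_mp)
qed

text \<open>A limit of the empirical measures of a chain of steps, each starting where the previous one
  ended up to integer translations, is holonomic: the averages of a coboundary telescope.\<close>
lemma holonomic_if_empirical_limit:
  fixes z :: "nat \<Rightarrow> (real^'n) \<times> (real^'n)" and xs :: "nat \<Rightarrow> real^'n"
  assumes r: "strict_mono r"
    and chain: "\<And>k. int_vec (fst (z k) - xs (Suc k))" "\<And>k. int_vec (fst (z k) + \<tau> *\<^sub>R snd (z k) - xs k)"
    and lim: "\<And>f B. continuous_on UNIV f \<Longrightarrow> (\<And>x. \<bar>f x\<bar> \<le> B) \<Longrightarrow>
      (\<lambda>j. (\<Sum>k<Suc (r j). f (z k)) / Suc (r j)) \<longlonglongrightarrow> integral\<^sup>L \<mu> f"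
  shows "holonomic \<tau> \<mu>"
  unfolding holonomic_def
proof (intro allI impI, elim conjE)
  fix \<phi> :: "real^'n \<Rightarrow> real" assume \<phi>: "continuous_on UNIV \<phi>" "periodic \<phi>"
  obtain B where B: "\<And>x. \<bar>\<phi> x\<bar> \<le> B"
    using periodic_bounded[OF \<phi>] by metis
  define f where "f = (\<lambda>(x, v). \<phi> (x + \<tau> *\<^sub>R v) - \<phi> x)"
  have "\<bar>f (x, v)\<bar> \<le> 2 * B" for x v
    using B[of x] B[of "x + \<tau> *\<^sub>R v"] unfolding f_def by simp
  then have f: "continuous_on UNIV f" "\<And>w. \<bar>f w\<bar> \<le> 2 * B"
    by (auto simp: f_def case_prod_beta intro!: continuous_intros continuous_on_compose2[OF \<phi>(1)])
  have "f (z k) = \<phi> (xs k) - \<phi> (xs (Suc k))" for k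
    using periodic_add[OF \<phi>(2) chain(1)[of k], of "xs (Suc k)"] periodic_add[OF \<phi>(2) chain(2)[of k], of "xs k"]
    by (simp add: f_def case_prod_beta)
  then have sum: "(\<Sum>k<n. f (z k)) = \<phi> (xs 0) - \<phi> (xs n)" for n
    using sum_lessThan_telescope'[of "\<lambda>k. \<phi> (xs k)" n] by simp
  have "(\<lambda>j. inverse (Suc (r j)) * (\<phi> (xs 0) - \<phi> (xs (Suc (r j))))) \<longlonglongrightarrow> 0"
  proof (rule lim_null_mult_right_bounded)
    show "(\<lambda>j. inverse (real (Suc (r j)))) \<longlonglongrightarrow> 0"
      using LIMSEQ_subseq_LIMSEQ[OF LIMSEQ_inverse_real_of_nat r] by (simp add: o_def)
    show "\<forall>\<^sub>F j in sequentially. norm (\<phi> (xs 0) - \<phi> (xs (Suc (r j)))) \<le> 2 * B"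
    proof (intro always_eventually allI)
      fix j
      show "norm (\<phi> (xs 0) - \<phi> (xs (Suc (r j)))) \<le> 2 * B"
        using B[of "xs 0"] B[of "xs (Suc (r j))"] by simp
    qed
  qed
  then have "(\<lambda>j. (\<Sum>k<Suc (r j). f (z k)) / Suc (r j)) \<longlonglongrightarrow> 0"
    by (simp add: sum divide_inverse mult.commute)
  then show "integral\<^sup>L \<mu> (\<lambda>(x, v). \<phi> (x + \<tau> *\<^sub>R v) - \<phi> x) = 0"
    using lim[OF f] LIMSEQ_unique by (fastforce simp: f_def)
qed

section \<open>The Lagrangian of a Tonelli Hamiltonian\<close>

locale tonelli_hamiltonian =
  fixes H :: "real^'n \<Rightarrow> real^'n \<Rightarrow> real"
  assumes tonelli: "tonelli H"
begin

lemma H_periodic: "periodic (\<lambda>x. H x p)"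
  using tonelli by (simp add: tonelli_def)

lemma continuous_on_H: "continuous_on UNIV (\<lambda>z. H (fst z) (snd z))"
proof -
  obtain H' where "\<forall>z. ((\<lambda>(x, p). H x p) has_derivative blinfun_apply (H' z)) (at z)"
    using tonelli unfolding tonelli_def by blast
  then have "continuous_on UNIV (\<lambda>(x, p). H x p)"
    by (intro has_derivative_continuous_on) (auto intro: has_derivative_at_withinI)
  then show ?thesis by (simp add: case_prod_beta')
qed

lemma H_superlinear: "\<exists>B. \<forall>x p. H x p \<ge> A * norm p - B"
  using tonelli by (simp add: tonelli_def)

lemma bdd_above_lagrangian: "bdd_above (range (\<lambda>p. p \<bullet> v - H x p))"
proof -
  obtain B where B: "\<And>x p. H x p \<ge> (norm v + 1) * norm p - B"
    using H_superlinear by blast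
  have "p \<bullet> v - H x p \<le> B" for p
  proof -
    have "p \<bullet> v \<le> norm v * norm p"
      using norm_cauchy_schwarz[of p v] by (simp add: mult.commute)
    moreover have "norm v * norm p + norm p - B \<le> H x p"
      using B[where x=x and p=p] by (simp add: distrib_right)
    ultimately show ?thesis using norm_ge_zero[of p] by linarith
  qed
  then show ?thesis by (auto intro!: bdd_aboveI)
qed

lemma lagrangian_ge: "p \<bullet> v - H x p \<le> lagrangian H x v"
  unfolding lagrangian_def by (rule cSUP_upper[OF _ bdd_above_lagrangian]) simp

lemma lagrangian_le: "(\<And>p. p \<bullet> v - H x p \<le> t) \<Longrightarrow> lagrangian H x v \<le> t"
  unfolding lagrangian_def by (rule cSUP_least) auto

lemma lagrangian_add_int_vec: "int_vec z \<Longrightarrow> lagrangian H (x + z) v = lagrangian H x v"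
  using periodic_add[OF H_periodic] by (simp add: lagrangian_def)

lemma lagrangian_ge_norm: obtains C where "\<And>x v. norm v - C \<le> lagrangian H x v"
proof -
  obtain C where C: "\<And>x p. p \<in> cball 0 1 \<Longrightarrow> norm (H x p) \<le> C"
    using periodic_bounded_on_compact[OF continuous_on_H H_periodic compact_cball] by metis
  have "norm v - C \<le> lagrangian H x v" for x v
  proof -
    define p where "p = (1 / norm v) *\<^sub>R v"
    have "p \<in> cball 0 1" "p \<bullet> v = norm v"
      by (simp_all add: p_def divide_simps dot_square_norm power2_eq_square)
    then show ?thesis
      using lagrangian_ge[of p v x] C[of p x] by simp
  qed
  then show ?thesis by (rule that)
qed

lemma lagrangian_lsc:
  assumes "x \<longlonglongrightarrow> x0" "v \<longlonglongrightarrow> v0" "t \<longlonglongrightarrow> t0" "\<And>j. lagrangian H (x j) (v j) \<le> t j"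
  shows "lagrangian H x0 v0 \<le> t0"
proof (rule lagrangian_le)
  fix p
  have "isCont (\<lambda>z. H (fst z) (snd z)) (x0, p)"
    using continuous_on_H by (simp add: continuous_on_eq_continuous_at)
  then have "(\<lambda>j. H (fst (x j, p)) (snd (x j, p))) \<longlonglongrightarrow> H (fst (x0, p)) (snd (x0, p))"
    by (rule isCont_tendsto_compose) (intro tendsto_intros assms)
  then have lim: "(\<lambda>j. p \<bullet> v j - H (x j) p) \<longlonglongrightarrow> p \<bullet> v0 - H x0 p"
    by (intro tendsto_intros assms) simp
  have "p \<bullet> v j - H (x j) p \<le> t j" for j
    using lagrangian_ge assms(4) order_trans by blast
  then show "p \<bullet> v0 - H x0 p \<le> t0"
    by (intro LIMSEQ_le[OF lim assms(3)]) simp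
qed

lemma borel_measurable_lagrangian: "(\<lambda>z. lagrangian H (fst z) (snd z)) \<in> borel_measurable borel"
proof (rule borel_measurable_iff_le[THEN iffD2], intro allI)
  fix a
  have "closed {z. lagrangian H (fst z) (snd z) \<le> a}"
    unfolding closed_sequential_limits
  proof (intro allI impI, elim conjE)
    fix s l assume "\<forall>j. s j \<in> {z. lagrangian H (fst z) (snd z) \<le> a}" "s \<longlonglongrightarrow> l"
    then show "l \<in> {z. lagrangian H (fst z) (snd z) \<le> a}"
      using lagrangian_lsc[OF tendsto_fst tendsto_snd tendsto_const, of s l s l a] by simp
  qed
  then show "{z \<in> space borel. lagrangian H (fst z) (snd z) \<le> a} \<in> sets borel"
    by (simp add: borel_closed)
qed

end

section \<open>Calibration for the discrete Lax--Oleinik equation\<close>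

locale dLO_solution = tonelli_hamiltonian H for H :: "real^'n \<Rightarrow> real^'n \<Rightarrow> real" +
  fixes \<tau> c :: real and u :: "real^'n \<Rightarrow> real"
  assumes tau_pos: "0 < \<tau>"
    and continuous_u: "continuous_on UNIV u" and periodic_u: "periodic u"
    and solves: "solves_dLO H \<tau> c u"
begin

lemma u_bounded: obtains B where "\<And>x. \<bar>u x\<bar> \<le> B"
  using periodic_bounded[OF continuous_u periodic_u] by blast

lemma tendsto_u: "f \<longlonglongrightarrow> a \<Longrightarrow> (\<lambda>j. u (f j)) \<longlonglongrightarrow> u a"
  by (rule continuous_on_tendsto_compose[OF continuous_u]) auto

lemma Lcal_add_int_vec: "int_vec z \<Longrightarrow> Lcal H \<tau> (x + z) (y + z) = Lcal H \<tau> x y"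
  by (simp add: Lcal_def lagrangian_add_int_vec)

lemma Lcal_step: "Lcal H \<tau> x (x + \<tau> *\<^sub>R v) = \<tau> * lagrangian H x v"
  using tau_pos by (simp add: Lcal_def)

lemma Lcal_ge_norm: obtains C where "\<And>x y. norm (y - x) - C \<le> Lcal H \<tau> x y"
proof -
  obtain C where C: "\<And>x v. norm v - C \<le> lagrangian H x v"
    using lagrangian_ge_norm by metis
  have "norm (y - x) - \<tau> * C \<le> Lcal H \<tau> x y" for x y
    using mult_left_mono[OF C[where x=x and v="(1 / \<tau>) *\<^sub>R (y - x)"], of \<tau>] tau_pos
    by (simp add: Lcal_def right_diff_distrib)
  then show ?thesis by (rule that)
qed

lemma Lcal_lsc:
  assumes "x \<longlonglongrightarrow> x0" "y \<longlonglongrightarrow> y0" "t \<longlonglongrightarrow> t0" "\<And>j. Lcal H \<tau> (x j) (y j) \<le> t j"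
  shows "Lcal H \<tau> x0 y0 \<le> t0"
proof -
  have "lagrangian H x0 ((1 / \<tau>) *\<^sub>R (y0 - x0)) \<le> t0 / \<tau>"
  proof (rule lagrangian_lsc[OF assms(1)])
    show "(\<lambda>j. (1 / \<tau>) *\<^sub>R (y j - x j)) \<longlonglongrightarrow> (1 / \<tau>) *\<^sub>R (y0 - x0)"
      by (intro tendsto_intros assms)
    show "(\<lambda>j. t j / \<tau>) \<longlonglongrightarrow> t0 / \<tau>"
      using tau_pos by (intro tendsto_intros assms) simp
    show "lagrangian H (x j) ((1 / \<tau>) *\<^sub>R (y j - x j)) \<le> t j / \<tau>" for j
      using assms(4)[of j] tau_pos by (simp add: Lcal_def pos_le_divide_eq mult.commute)
  qed
  then show ?thesis
    using tau_pos by (simp add: Lcal_def pos_le_divide_eq mult.commute)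
qed

lemma bdd_below_dLO: "bdd_below (range (\<lambda>x. u x + Lcal H \<tau> x y))"
proof -
  obtain B where B: "\<And>x. \<bar>u x\<bar> \<le> B" using u_bounded by metis
  obtain C where C: "\<And>x y. norm (y - x) - C \<le> Lcal H \<tau> x y" using Lcal_ge_norm by metis
  have "- B - C \<le> u x + Lcal H \<tau> x y" for x
    using B[of x] C[where x=x and y=y] norm_ge_zero[of "y - x"] by linarith
  then show ?thesis by (auto intro!: bdd_belowI)
qed

lemma dLO_le: "u y + \<tau> * c \<le> u x + Lcal H \<tau> x y"
  using cINF_lower[OF bdd_below_dLO, of x y] solves by (simp add: solves_dLO_def mult.commute)

definition calibrating :: "real^'n \<Rightarrow> real^'n \<Rightarrow> bool" where
  "calibrating x y \<longleftrightarrow> u y + \<tau> * c = u x + Lcal H \<tau> x y"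

lemma calibrated_iff: "calibrated H \<tau> c u xs \<longleftrightarrow> (\<forall>k. calibrating (xs (Suc k)) (xs k))"
  by (simp add: calibrated_def calibrating_def)

text \<open>A minimising sequence is bounded by coercivity of \<open>Lcal\<close>; by lower semicontinuity any
  limit point of it attains the infimum.\<close>
lemma dLO_attained: "\<exists>x. calibrating x y"
proof -
  define m where "m = u y + \<tau> * c"
  have "\<exists>x. u x + Lcal H \<tau> x y < m + inverse (Suc j)" for j
    using solves cINF_less_iff[OF UNIV_not_empty bdd_below_dLO, of y "m + inverse (Suc j)"]
    by (simp add: solves_dLO_def m_def mult.commute)
  then obtain x where x: "\<And>j. u (x j) + Lcal H \<tau> (x j) y < m + inverse (Suc j)"
    by metis
  obtain B where B: "\<And>x. \<bar>u x\<bar> \<le> B" using u_bounded by metis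
  obtain C where C: "\<And>x y. norm (y - x) - C \<le> Lcal H \<tau> x y" using Lcal_ge_norm by metis
  have "x j \<in> cball y (m + 1 + B + C)" for j
    using x[of j] B[of "x j"] C[where x="x j" and y=y] inverse_le_1_iff[of "real (Suc j)"]
    by (simp add: dist_norm norm_minus_commute)
  then obtain x0 r where r: "strict_mono r" and lim: "(x \<circ> r) \<longlonglongrightarrow> x0"
    using compact_imp_seq_compact[OF compact_cball] seq_compactE by metis
  have "Lcal H \<tau> x0 y \<le> m - u x0"
  proof (rule Lcal_lsc[OF lim tendsto_const])
    show "(\<lambda>j. m + inverse (Suc (r j)) - u ((x \<circ> r) j)) \<longlonglongrightarrow> m - u x0"
      using tendsto_diff[OF tendsto_add[OF tendsto_const LIMSEQ_subseq_LIMSEQ[OF LIMSEQ_inverse_real_of_nat r]]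
          tendsto_u[OF lim], of m]
      by (simp add: o_def)
    show "Lcal H \<tau> ((x \<circ> r) j) y \<le> m + inverse (Suc (r j)) - u ((x \<circ> r) j)" for j
      using x[of "r j"] by simp
  qed
  with dLO_le[of y x0] have "calibrating x0 y" by (simp add: calibrating_def m_def)
  then show ?thesis ..
qed

lemma calibrating_step_bounded: obtains R where "\<And>x y. calibrating x y \<Longrightarrow> norm (y - x) \<le> R"
proof -
  obtain B where B: "\<And>x. \<bar>u x\<bar> \<le> B" using u_bounded by metis
  obtain C where C: "\<And>x y. norm (y - x) - C \<le> Lcal H \<tau> x y" using Lcal_ge_norm by metis
  have "norm (y - x) \<le> 2 * B + \<bar>\<tau> * c\<bar> + C" if "calibrating x y" for x y
    using that B[of x] B[of y] C[where x=x and y=y] abs_ge_self[of "\<tau> * c"]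
    unfolding calibrating_def abs_le_iff by linarith
  then show ?thesis by (rule that)
qed

lemma calibrating_limit:
  assumes "x \<longlonglongrightarrow> x0" "y \<longlonglongrightarrow> y0" "\<And>j. calibrating (x j) (y j)"
  shows "calibrating x0 y0"
proof -
  have "Lcal H \<tau> x0 y0 \<le> u y0 + \<tau> * c - u x0"
  proof (rule Lcal_lsc[OF assms(1,2)])
    show "(\<lambda>j. u (y j) + \<tau> * c - u (x j)) \<longlonglongrightarrow> u y0 + \<tau> * c - u x0"
      by (intro tendsto_intros tendsto_u assms)
    show "Lcal H \<tau> (x j) (y j) \<le> u (y j) + \<tau> * c - u (x j)" for j
      using assms(3)[of j] by (simp add: calibrating_def)
  qed
  with dLO_le[of y0 x0] show ?thesis by (simp add: calibrating_def)
qed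

lemma calibrating_add_int_vec: "calibrating x y \<Longrightarrow> int_vec z \<Longrightarrow> calibrating (x + z) (y + z)"
  by (simp add: calibrating_def periodic_add[OF periodic_u] Lcal_add_int_vec)

lemma calibrated_configuration_within:
  assumes pred: "\<And>y. y \<in> S \<Longrightarrow> \<exists>x\<in>S. calibrating x y" and "y \<in> S"
  obtains xs where "calibrated H \<tau> c u xs" "xs 0 = y" "\<And>k. xs k \<in> S"
proof -
  obtain p where p: "\<And>y. y \<in> S \<Longrightarrow> p y \<in> S \<and> calibrating (p y) y"
    using pred by metis
  define xs where "xs k = (p ^^ k) y" for k
  have xs: "xs k \<in> S" for k
    by (induction k) (simp_all add: xs_def assms(2) p)
  then have "calibrated H \<tau> c u xs"
    using p by (simp add: calibrated_iff xs_def)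
  then show ?thesis using that xs by (simp add: xs_def)
qed

lemma calibrated_case_nat:
  "calibrated H \<tau> c u (case_nat y xs) \<longleftrightarrow> calibrating (xs 0) y \<and> calibrated H \<tau> c u xs"
  unfolding calibrated_iff
proof (intro iffI conjI allI; (elim conjE)?)
  assume "\<forall>k. calibrating (case_nat y xs (Suc k)) (case_nat y xs k)"
  then show "calibrating (xs 0) y" "calibrating (xs (Suc k)) (xs k)" for k
    by (auto dest: spec[of _ 0] spec[of _ "Suc k"])
next
  fix k assume "calibrating (xs 0) y" "\<forall>k. calibrating (xs (Suc k)) (xs k)"
  then show "calibrating (case_nat y xs (Suc k)) (case_nat y xs k)"
    by (cases k) auto
qed

definition calibrated_pairs :: "((real^'n) \<times> (real^'n)) set" where
  "calibrated_pairs = {(x, v). calibrating x (x + \<tau> *\<^sub>R v)}"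

lemma calibrated_pair_of_calibrated:
  "calibrated H \<tau> c u xs \<Longrightarrow> (xs (Suc k), (1 / \<tau>) *\<^sub>R (xs k - xs (Suc k))) \<in> calibrated_pairs"
  using tau_pos by (simp add: calibrated_pairs_def calibrated_iff)

lemma closed_calibrated_pairs: "closed calibrated_pairs"
  unfolding closed_sequential_limits
proof (intro allI impI, elim conjE)
  fix s l assume s: "\<forall>j. s j \<in> calibrated_pairs" and lim: "s \<longlonglongrightarrow> l"
  have "calibrating (fst l) (fst l + \<tau> *\<^sub>R snd l)"
    by (rule calibrating_limit[of "\<lambda>j. fst (s j)" _ "\<lambda>j. fst (s j) + \<tau> *\<^sub>R snd (s j)"])
       (use s in \<open>auto intro!: tendsto_intros lim simp: calibrated_pairs_def case_prod_beta\<close>)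
  then show "l \<in> calibrated_pairs"
    by (simp add: calibrated_pairs_def case_prod_beta)
qed

lemma int_translation_invariant_calibrated_pairs: "int_translation_invariant calibrated_pairs"
  unfolding int_translation_invariant_def calibrated_pairs_def
proof clarify
  fix x v and z :: "real^'n" assume "calibrating x (x + \<tau> *\<^sub>R v)" "int_vec z"
  then have "calibrating (x + z) (x + \<tau> *\<^sub>R v + z)"
    by (rule calibrating_add_int_vec)
  then show "calibrating (x + z) (x + z + \<tau> *\<^sub>R v)"
    by (simp add: ac_simps)
qed

lemma calibrated_pairs_velocity_bounded:
  obtains R where "\<And>x v. (x, v) \<in> calibrated_pairs \<Longrightarrow> norm v \<le> R"
proof -
  obtain R where R: "\<And>x y. calibrating x y \<Longrightarrow> norm (y - x) \<le> R"
    using calibrating_step_bounded by metis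
  have "norm v \<le> R / \<tau>" if "(x, v) \<in> calibrated_pairs" for x v
    using R[of x "x + \<tau> *\<^sub>R v"] that tau_pos
    by (simp add: calibrated_pairs_def pos_le_divide_eq mult.commute)
  then show ?thesis by (rule that)
qed

lemma compact_proj_calibrated_pairs: "compact (proj ` calibrated_pairs)"
  using calibrated_pairs_velocity_bounded
  by (metis compact_proj_image int_translation_invariant_calibrated_pairs closed_calibrated_pairs)

subsection \<open>The discrete Aubry set\<close>

lemma mem_Aubry_lift_iff:
  "(x, v) \<in> Aubry_lift H \<tau> c u \<longleftrightarrow>
    (\<forall>n. \<exists>xs. calibrated H \<tau> c u xs \<and> xs (Suc n) = x \<and> xs n = x + \<tau> *\<^sub>R v)"
proof -
  have "(x, v) \<in> Psi H \<tau> c u n (Sigma_set H \<tau> c u) \<longleftrightarrow>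
      (\<exists>xs. calibrated H \<tau> c u xs \<and> xs (Suc n) = x \<and> xs n = x + \<tau> *\<^sub>R v)" for n
  proof
    assume "(x, v) \<in> Psi H \<tau> c u n (Sigma_set H \<tau> c u)"
    then show "\<exists>xs. calibrated H \<tau> c u xs \<and> xs (Suc n) = x \<and> xs n = x + \<tau> *\<^sub>R v"
      using tau_pos by (auto simp: Psi_def)
  next
    assume "\<exists>xs. calibrated H \<tau> c u xs \<and> xs (Suc n) = x \<and> xs n = x + \<tau> *\<^sub>R v"
    then obtain xs where xs: "calibrated H \<tau> c u xs" "xs (Suc n) = x" "xs n = x + \<tau> *\<^sub>R v"
      by blast
    define v' where "v' = (1 / \<tau>) *\<^sub>R (xs 0 - xs 1)"
    have xs0: "xs 0 = xs 1 + \<tau> *\<^sub>R v'"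
      using tau_pos by (simp add: v'_def)
    then have "(xs 1, v') \<in> Sigma_set H \<tau> c u"
      using xs(1) by (auto simp: Sigma_set_def)
    moreover have "(x, v) = (xs (Suc n), (1 / \<tau>) *\<^sub>R (xs n - xs (Suc n)))"
      using xs(2,3) tau_pos by simp
    ultimately show "(x, v) \<in> Psi H \<tau> c u n (Sigma_set H \<tau> c u)"
      unfolding Psi_def mem_Collect_eq using xs(1) xs0
      by (intro exI[of _ xs] exI[of _ "xs 1"] exI[of _ v'] conjI) simp_all
  qed
  then show ?thesis by (simp add: Aubry_lift_def)
qed

lemma Aubry_lift_subset_calibrated_pairs: "Aubry_lift H \<tau> c u \<subseteq> calibrated_pairs"
proof clarify
  fix x v assume "(x, v) \<in> Aubry_lift H \<tau> c u"
  then obtain xs where "calibrated H \<tau> c u xs" "xs 1 = x" "xs 0 = x + \<tau> *\<^sub>R v"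
    using mem_Aubry_lift_iff[of x v] by auto
  then show "(x, v) \<in> calibrated_pairs"
    by (auto simp: calibrated_iff calibrated_pairs_def dest: spec[of _ 0])
qed

lemma calibrated_add_int_vec:
  "calibrated H \<tau> c u xs \<Longrightarrow> int_vec z \<Longrightarrow> calibrated H \<tau> c u (\<lambda>k. xs k + z)"
  by (simp add: calibrated_iff calibrating_add_int_vec)

lemma int_translation_invariant_Aubry_lift: "int_translation_invariant (Aubry_lift H \<tau> c u)"
  unfolding int_translation_invariant_def
proof clarify
  fix x v and z :: "real^'n"
  assume "(x, v) \<in> Aubry_lift H \<tau> c u" "int_vec z"
  show "(x + z, v) \<in> Aubry_lift H \<tau> c u"
    unfolding mem_Aubry_lift_iff
  proof
    fix n
    obtain xs where "calibrated H \<tau> c u xs" "xs (Suc n) = x" "xs n = x + \<tau> *\<^sub>R v"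
      using \<open>(x, v) \<in> Aubry_lift H \<tau> c u\<close> mem_Aubry_lift_iff by blast
    then show "\<exists>xs. calibrated H \<tau> c u xs \<and> xs (Suc n) = x + z \<and> xs n = x + z + \<tau> *\<^sub>R v"
      using calibrated_add_int_vec[OF _ \<open>int_vec z\<close>]
      by (intro exI[of _ "\<lambda>k. xs k + z"]) (simp add: ac_simps)
  qed
qed

lemma calibrated_dist_le:
  assumes R: "\<And>x y. calibrating x y \<Longrightarrow> norm (y - x) \<le> R" and "calibrated H \<tau> c u xs"
  shows "norm (xs k - xs 0) \<le> real k * R"
proof (induction k)
  case (Suc k)
  have "xs (Suc k) - xs 0 = (xs k - xs 0) - (xs k - xs (Suc k))"
    by simp
  then have "norm (xs (Suc k) - xs 0) \<le> norm (xs k - xs (Suc k)) + norm (xs k - xs 0)"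
    using norm_triangle_ineq4[of "xs k - xs 0" "xs k - xs (Suc k)"] by simp
  also have "\<dots> \<le> R + real k * R"
    using R assms(2) Suc.IH by (intro add_mono) (auto simp: calibrated_iff)
  finally show ?case by (simp add: algebra_simps)
qed simp

lemma calibrated_convergent_subsequence:
  fixes xs :: "nat \<Rightarrow> nat \<Rightarrow> real^'n"
  assumes cal: "\<And>j. calibrated H \<tau> c u (xs j)" and bounded: "\<And>j. norm (xs j m) \<le> B"
  obtains r X where "strict_mono r" "calibrated H \<tau> c u X" "\<And>k. (\<lambda>j. xs (r j) k) \<longlonglongrightarrow> X k"
proof -
  obtain R where R: "\<And>x y. calibrating x y \<Longrightarrow> norm (y - x) \<le> R"
    using calibrating_step_bounded by metis
  define S where "S = PiE UNIV (\<lambda>k. cball (0::real^'n) (B + (real k + real m) * R))"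
  have "compactin (product_topology (\<lambda>_. euclidean) UNIV) S"
    unfolding S_def compactin_PiE by simp
  then have S: "compact S"
    by (simp add: euclidean_product_topology)
  have xs_S: "xs j \<in> S" for j
  proof -
    have "norm (xs j k) \<le> B + (real k + real m) * R" for k
      using bounded[of j] calibrated_dist_le[OF R cal, of j k] calibrated_dist_le[OF R cal, of j m]
        norm_triangle_ineq4[of "xs j k - xs j 0" "xs j m - xs j 0"] norm_triangle_ineq2[of "xs j k" "xs j m"]
      by (simp add: algebra_simps)
    then show ?thesis by (simp add: S_def PiE_def extensional_def)
  qed
  obtain X r where r: "strict_mono r" and lim: "(xs \<circ> r) \<longlonglongrightarrow> X"
    using seq_compactE[OF compact_imp_seq_compact[OF S], of xs] xs_S by blast
  have lim_k: "(\<lambda>j. xs (r j) k) \<longlonglongrightarrow> X k" for k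
    using continuous_on_tendsto_compose[OF continuous_on_product_coordinates lim] by (simp add: o_def)
  have "calibrated H \<tau> c u X"
    unfolding calibrated_iff
    using calibrating_limit[OF lim_k lim_k] cal by (auto simp: calibrated_iff)
  then show ?thesis by (rule that[OF r _ lim_k])
qed

lemma closed_Aubry_lift: "closed (Aubry_lift H \<tau> c u)"
  unfolding closed_sequential_limits
proof (intro allI impI, elim conjE)
  fix s l assume s: "\<forall>j. s j \<in> Aubry_lift H \<tau> c u" and lim: "s \<longlonglongrightarrow> l"
  obtain x v where l: "l = (x, v)" by (cases l)
  have lim_x: "(\<lambda>j. fst (s j)) \<longlonglongrightarrow> x" and lim_v: "(\<lambda>j. snd (s j)) \<longlonglongrightarrow> v"
    using tendsto_fst[OF lim] tendsto_snd[OF lim] by (simp_all add: l)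
  obtain B where B: "\<And>j. norm (fst (s j)) \<le> B"
    using convergent_imp_Bseq[OF convergentI[OF lim_x]] unfolding Bseq_def by (meson less_imp_le)
  show "l \<in> Aubry_lift H \<tau> c u"
    unfolding l mem_Aubry_lift_iff
  proof
    fix n
    have "\<exists>xs. calibrated H \<tau> c u xs \<and> xs (Suc n) = fst (s j) \<and> xs n = fst (s j) + \<tau> *\<^sub>R snd (s j)"
      for j
      using s mem_Aubry_lift_iff[of "fst (s j)" "snd (s j)"] by simp
    then obtain xs where xs: "\<And>j. calibrated H \<tau> c u (xs j)" "\<And>j. xs j (Suc n) = fst (s j)"
        "\<And>j. xs j n = fst (s j) + \<tau> *\<^sub>R snd (s j)"
      by metis
    obtain r X where r: "strict_mono r" and X: "calibrated H \<tau> c u X"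
      and lim_X: "\<And>k. (\<lambda>j. xs (r j) k) \<longlonglongrightarrow> X k"
      using calibrated_convergent_subsequence[of xs "Suc n" B] xs B by metis
    have "(\<lambda>j. xs (r j) (Suc n)) \<longlonglongrightarrow> x"
      using LIMSEQ_subseq_LIMSEQ[OF lim_x r] by (simp add: xs o_def)
    then have "X (Suc n) = x"
      using LIMSEQ_unique lim_X by blast
    have "(\<lambda>j. xs (r j) n) \<longlonglongrightarrow> x + \<tau> *\<^sub>R v"
      using LIMSEQ_subseq_LIMSEQ[OF lim_x r] LIMSEQ_subseq_LIMSEQ[OF lim_v r]
      by (auto simp: xs o_def intro!: tendsto_intros)
    then have "X n = x + \<tau> *\<^sub>R v"
      using LIMSEQ_unique lim_X by blast
    with X \<open>X (Suc n) = x\<close> show "\<exists>xs. calibrated H \<tau> c u xs \<and> xs (Suc n) = x \<and> xs n = x + \<tau> *\<^sub>R v"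
      by blast
  qed
qed

lemma compact_Aubry_set: "compact (Aubry_set H \<tau> c u)"
proof -
  obtain R where "\<And>x v. (x, v) \<in> calibrated_pairs \<Longrightarrow> norm v \<le> R"
    using calibrated_pairs_velocity_bounded by metis
  then have "\<And>x v. (x, v) \<in> Aubry_lift H \<tau> c u \<Longrightarrow> norm v \<le> R"
    using Aubry_lift_subset_calibrated_pairs by blast
  then show ?thesis
    unfolding Aubry_set_def
    by (rule compact_proj_image[OF int_translation_invariant_Aubry_lift closed_Aubry_lift])
qed

text \<open>Backward continuation within \<open>A\<close> gives a calibrated configuration ending at the given pair;
  prepending \<open>n\<close> forward steps moves the pair to position \<open>n\<close>.\<close>
lemma calibrated_configuration_through_pair:
  assumes A: "A \<subseteq> calibrated_pairs"
    and pred: "\<And>x v. (x, v) \<in> A \<Longrightarrow> \<exists>x' v'. (x', v') \<in> A \<and> x' + \<tau> *\<^sub>R v' = x"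
    and succ: "\<And>x v. (x, v) \<in> A \<Longrightarrow> \<exists>v'. (x + \<tau> *\<^sub>R v, v') \<in> A"
    and "(x, v) \<in> A"
  shows "\<exists>xs. calibrated H \<tau> c u xs \<and> xs (Suc n) = x \<and> xs n = x + \<tau> *\<^sub>R v \<and> xs 0 \<in> fst ` A"
  using assms(4)
proof (induction n arbitrary: x v)
  case 0
  have "\<exists>x'\<in>fst ` A. calibrating x' y" if "y \<in> fst ` A" for y
    using that pred A by (force simp: calibrated_pairs_def)
  moreover have "x \<in> fst ` A"
    using 0 by force
  ultimately obtain xs where xs: "calibrated H \<tau> c u xs" "xs 0 = x"
    using calibrated_configuration_within[of "fst ` A" x] by metis
  have "calibrating x (x + \<tau> *\<^sub>R v)"
    using 0 A by (auto simp: calibrated_pairs_def)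
  moreover have "x + \<tau> *\<^sub>R v \<in> fst ` A"
    using succ[OF 0] by force
  ultimately show ?case
    using xs by (intro exI[of _ "case_nat (x + \<tau> *\<^sub>R v) xs"]) (simp add: calibrated_case_nat)
next
  case (Suc n)
  then obtain xs a w where xs: "calibrated H \<tau> c u xs" "xs (Suc n) = x" "xs n = x + \<tau> *\<^sub>R v"
    and a: "xs 0 = a" "(a, w) \<in> A"
    by force
  have "calibrating a (a + \<tau> *\<^sub>R w)"
    using a A by (auto simp: calibrated_pairs_def)
  moreover have "a + \<tau> *\<^sub>R w \<in> fst ` A"
    using succ[OF a(2)] by force
  ultimately show ?case
    using xs a by (intro exI[of _ "case_nat (a + \<tau> *\<^sub>R w) xs"]) (simp add: calibrated_case_nat)
qed

lemma subset_Aubry_lift: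
  assumes "A \<subseteq> calibrated_pairs"
    and "\<And>x v. (x, v) \<in> A \<Longrightarrow> \<exists>x' v'. (x', v') \<in> A \<and> x' + \<tau> *\<^sub>R v' = x"
    and "\<And>x v. (x, v) \<in> A \<Longrightarrow> \<exists>v'. (x + \<tau> *\<^sub>R v, v') \<in> A"
  shows "A \<subseteq> Aubry_lift H \<tau> c u"
proof clarify
  fix x v assume xv: "(x, v) \<in> A"
  show "(x, v) \<in> Aubry_lift H \<tau> c u"
    unfolding mem_Aubry_lift_iff
  proof
    fix n
    show "\<exists>xs. calibrated H \<tau> c u xs \<and> xs (Suc n) = x \<and> xs n = x + \<tau> *\<^sub>R v"
      using calibrated_configuration_through_pair[where A=A and x=x and v=v and n=n] assms xv
      by blast
  qed
qed

subsection \<open>Action of holonomic measures\<close>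

definition calibration_defect :: "(real^'n) \<times> (real^'n) \<Rightarrow> real" where
  "calibration_defect = (\<lambda>(x, v). u x + Lcal H \<tau> x (x + \<tau> *\<^sub>R v) - u (x + \<tau> *\<^sub>R v) - \<tau> * c)"

lemma calibration_defect_nonneg: "0 \<le> calibration_defect z"
proof (cases z)
  case (Pair x v)
  then show ?thesis
    using dLO_le[of "x + \<tau> *\<^sub>R v" x] by (simp add: calibration_defect_def)
qed

lemma calibration_defect_eq_0_iff: "calibration_defect z = 0 \<longleftrightarrow> z \<in> calibrated_pairs"
  by (auto simp: calibration_defect_def calibrated_pairs_def calibrating_def split: prod.split)

lemma integrable_coboundary:
  assumes "prob_space \<mu>" "sets \<mu> = sets borel"
  shows "integrable \<mu> (\<lambda>(x, v). u (x + \<tau> *\<^sub>R v) - u x)"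
proof -
  obtain B where B: "\<And>x. \<bar>u x\<bar> \<le> B" using u_bounded by metis
  have "\<bar>u (x + \<tau> *\<^sub>R v) - u x\<bar> \<le> 2 * B" for x v
    using B[of x] B[of "x + \<tau> *\<^sub>R v"] by linarith
  then show ?thesis
    by (intro integrable_bounded_continuous[OF prob_space.finite_measure[OF assms(1)] assms(2), of _ "2 * B"])
       (auto simp: case_prod_beta intro!: continuous_intros continuous_on_compose2[OF continuous_u])
qed

lemma integral_coboundary:
  assumes "holonomic \<tau> \<mu>"
  shows "integral\<^sup>L \<mu> (\<lambda>(x, v). u (x + \<tau> *\<^sub>R v) - u x) = 0"
  using assms continuous_u periodic_u by (simp add: holonomic_def)

lemma integral_calibration_defect:
  assumes "admissible H \<tau> \<mu>"
  shows "integrable \<mu> calibration_defect" "integral\<^sup>L \<mu> calibration_defect = action H \<tau> \<mu> - \<tau> * c"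
proof -
  let ?L = "\<lambda>(x, v). Lcal H \<tau> x (x + \<tau> *\<^sub>R v)"
  let ?cob = "\<lambda>(x, v). u (x + \<tau> *\<^sub>R v) - u x"
  have \<mu>: "prob_space \<mu>" "sets \<mu> = sets borel" "holonomic \<tau> \<mu>" and L: "integrable \<mu> ?L"
    using assms by (auto simp: admissible_def)
  have cob: "integrable \<mu> ?cob"
    by (rule integrable_coboundary[OF \<mu>(1,2)])
  have const: "integrable \<mu> (\<lambda>_. \<tau> * c)"
    using prob_space.finite_measure[OF \<mu>(1)] by (rule finite_measure.integrable_const)
  have defect: "calibration_defect = (\<lambda>z. ?L z - ?cob z - \<tau> * c)"
    by (auto simp: calibration_defect_def)
  show "integrable \<mu> calibration_defect"
    unfolding defect by (intro Bochner_Integration.integrable_diff L cob const)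
  have "integral\<^sup>L \<mu> calibration_defect = integral\<^sup>L \<mu> (\<lambda>z. ?L z - ?cob z) - integral\<^sup>L \<mu> (\<lambda>_. \<tau> * c)"
    unfolding defect
    by (rule Bochner_Integration.integral_diff[OF Bochner_Integration.integrable_diff[OF L cob] const])
  also have "\<dots> = action H \<tau> \<mu> - \<tau> * c"
    using Bochner_Integration.integral_diff[OF L cob] integral_coboundary[OF \<mu>(3)]
      prob_space.prob_space[OF \<mu>(1)] by (simp add: action_def)
  finally show "integral\<^sup>L \<mu> calibration_defect = action H \<tau> \<mu> - \<tau> * c" .
qed

lemma action_ge:
  assumes "admissible H \<tau> \<mu>"
  shows "\<tau> * c \<le> action H \<tau> \<mu>"
proof -
  have "0 \<le> integral\<^sup>L \<mu> calibration_defect"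
    by (simp add: calibration_defect_nonneg)
  then show ?thesis
    using integral_calibration_defect(2)[OF assms] by simp
qed

lemma AE_calibrated_pairs_if_action_eq:
  assumes "admissible H \<tau> \<mu>" "action H \<tau> \<mu> = \<tau> * c"
  shows "AE z in \<mu>. z \<in> calibrated_pairs"
  using integral_nonneg_eq_0_iff_AE[OF integral_calibration_defect(1)[OF assms(1)]]
    integral_calibration_defect(2)[OF assms(1)] assms(2) calibration_defect_nonneg
  by (simp add: calibration_defect_eq_0_iff)

lemma admissible_action_eq_if_AE_calibrated_pairs:
  assumes \<mu>: "prob_space \<mu>" "sets \<mu> = sets borel" "holonomic \<tau> \<mu>"
    and AE: "AE z in \<mu>. z \<in> calibrated_pairs"
  shows "admissible H \<tau> \<mu>" "action H \<tau> \<mu> = \<tau> * c"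
proof -
  let ?L = "\<lambda>(x, v). Lcal H \<tau> x (x + \<tau> *\<^sub>R v)"
  let ?cob = "\<lambda>(x, v). u (x + \<tau> *\<^sub>R v) - u x"
  have const: "integrable \<mu> (\<lambda>_. \<tau> * c)"
    using prob_space.finite_measure[OF \<mu>(1)] by (rule finite_measure.integrable_const)
  have g: "integrable \<mu> (\<lambda>z. ?cob z + \<tau> * c)"
    by (rule Bochner_Integration.integrable_add[OF integrable_coboundary[OF \<mu>(1,2)] const])
  have "?L = (\<lambda>z. \<tau> * lagrangian H (fst z) (snd z))"
    by (auto simp: Lcal_step)
  then have L_meas: "?L \<in> borel_measurable \<mu>"
    using measurable_sets_borel[OF \<mu>(2) borel_measurable_lagrangian] by simp
  have L_eq: "AE z in \<mu>. ?cob z + \<tau> * c = ?L z"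
    using AE by eventually_elim (auto simp: calibrated_pairs_def calibrating_def)
  have "integrable \<mu> ?L"
    by (rule integrable_cong_AE_imp[OF g L_meas L_eq])
  then show "admissible H \<tau> \<mu>"
    using \<mu> by (simp add: admissible_def)
  have "action H \<tau> \<mu> = integral\<^sup>L \<mu> (\<lambda>z. ?cob z + \<tau> * c)"
    unfolding action_def
    by (rule integral_cong_AE[OF L_meas borel_measurable_integrable[OF g]]) (use L_eq in auto)
  also have "\<dots> = \<tau> * c"
    using Bochner_Integration.integral_add[OF integrable_coboundary[OF \<mu>(1,2)] const]
      integral_coboundary[OF \<mu>(3)] prob_space.prob_space[OF \<mu>(1)] by simp
  finally show "action H \<tau> \<mu> = \<tau> * c" .
qed

definition calibrated_measure :: "((real^'n) \<times> (real^'n)) measure \<Rightarrow> bool" where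
  "calibrated_measure \<mu> \<longleftrightarrow> admissible H \<tau> \<mu> \<and> action H \<tau> \<mu> = \<tau> * c"

lemma calibrated_measure_iff:
  "calibrated_measure \<mu> \<longleftrightarrow>
    prob_space \<mu> \<and> sets \<mu> = sets borel \<and> holonomic \<tau> \<mu> \<and> (AE z in \<mu>. z \<in> calibrated_pairs)"
  using AE_calibrated_pairs_if_action_eq admissible_action_eq_if_AE_calibrated_pairs
  by (auto simp: calibrated_measure_def admissible_def)

text \<open>A limit of the empirical measures of the steps of a calibrated configuration, reduced to the
  fundamental domain.\<close>
lemma calibrated_measure_exists: "\<exists>\<mu>. calibrated_measure \<mu>"
proof -
  obtain xs where xs: "calibrated H \<tau> c u xs"
    by (rule calibrated_configuration_within[of UNIV 0]) (use dLO_attained in auto)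
  define z where "z k = (xs (Suc k) - floor_vec (xs (Suc k)), (1 / \<tau>) *\<^sub>R (xs k - xs (Suc k)))" for k
  have chain: "int_vec (fst (z k) - xs (Suc k))" "int_vec (fst (z k) + \<tau> *\<^sub>R snd (z k) - xs k)" for k
    using int_vec_uminus[OF int_vec_floor_vec] tau_pos by (simp_all add: z_def)
  have z: "z k \<in> calibrated_pairs" for k
  proof -
    have "(xs (Suc k) + - floor_vec (xs (Suc k)), (1 / \<tau>) *\<^sub>R (xs k - xs (Suc k))) \<in> calibrated_pairs"
      using int_translation_invariant_calibrated_pairs calibrated_pair_of_calibrated[OF xs, of k]
        int_vec_uminus[OF int_vec_floor_vec]
      unfolding int_translation_invariant_def by blast
    then show ?thesis
      by (simp add: z_def)
  qed
  obtain R where R: "\<And>x v. (x, v) \<in> calibrated_pairs \<Longrightarrow> norm v \<le> R"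
    using calibrated_pairs_velocity_bounded by metis
  have "z k \<in> cbox 0 1 \<times> cball 0 R" for k
    using diff_floor_vec_in_cbox[of "xs (Suc k)"] R[of "fst (z k)" "snd (z k)"] z[of k] by (simp add: z_def)
  then have "range z \<subseteq> cbox 0 1 \<times> cball 0 R"
    by blast
  then have "bounded (range z)"
    by (rule bounded_subset[OF bounded_Times[OF bounded_cbox bounded_cball]])
  then obtain \<mu> r where r: "strict_mono r" and \<mu>: "prob_space \<mu>" "sets \<mu> = sets borel"
    and lim: "\<And>f B. continuous_on UNIV f \<Longrightarrow> (\<And>x. \<bar>f x\<bar> \<le> B) \<Longrightarrow>
      (\<lambda>j. (\<Sum>k<Suc (r j). f (z k)) / Suc (r j)) \<longlonglongrightarrow> integral\<^sup>L \<mu> f"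
    by (rule empirical_measures_converge) blast
  have "holonomic \<tau> \<mu>"
    by (rule holonomic_if_empirical_limit[OF r chain lim])
  moreover have "AE w in \<mu>. w \<in> calibrated_pairs"
    by (rule AE_mem_closed_if_empirical_limit[OF \<mu> closed_calibrated_pairs z lim])
  ultimately show ?thesis
    using \<mu> by (auto simp: calibrated_measure_iff)
qed

subsection \<open>The discrete Mather set\<close>

lemma measure_support_proj_subset:
  assumes "calibrated_measure \<mu>"
  shows "measure_support (distr \<mu> borel proj) \<subseteq> proj ` calibrated_pairs"
proof (rule measure_support_subset_closed)
  have "proj \<in> \<mu> \<rightarrow>\<^sub>M borel"
    using assms by (intro measurable_proj) (simp add: calibrated_measure_iff)
  moreover have "closed (proj ` calibrated_pairs)"
    by (rule compact_imp_closed[OF compact_proj_calibrated_pairs])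
  ultimately show "AE w in distr \<mu> borel proj. w \<in> proj ` calibrated_pairs"
    using assms by (auto simp: AE_distr_iff borel_closed calibrated_measure_iff elim: AE_mp)
qed (simp_all add: compact_imp_closed compact_proj_calibrated_pairs)

lemma compact_measure_support_proj:
  "calibrated_measure \<mu> \<Longrightarrow> compact (measure_support (distr \<mu> borel proj))"
  using measure_support_proj_subset closed_measure_support compact_proj_calibrated_pairs
  by (metis compact_Int_closed inf.absorb_iff2)

text \<open>Multiplication in \<open>complex^'n\<close> is componentwise, so this is translation by \<open>\<tau> v\<close> on the
  torus.\<close>
definition torus_step :: "(complex^'n) \<times> (real^'n) \<Rightarrow> complex^'n" where
  "torus_step w = fst w * torus_proj (\<tau> *\<^sub>R snd w)"

lemma torus_step_proj: "torus_step (proj (x, v)) = torus_proj (x + \<tau> *\<^sub>R v)"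
  by (simp add: torus_step_def proj_def torus_proj_add)

lemma continuous_on_torus_step: "continuous_on UNIV torus_step"
  unfolding torus_step_def times_vec_def torus_proj_def
  by (intro continuous_on_vec_lambda continuous_intros)

lemma integral_torus_step:
  fixes g :: "complex^'n \<Rightarrow> real"
  assumes \<mu>: "calibrated_measure \<mu>" and g: "continuous_on UNIV g"
  shows "integral\<^sup>L (distr \<mu> borel proj) (\<lambda>w. g (torus_step w))
       = integral\<^sup>L (distr \<mu> borel proj) (\<lambda>w. g (fst w))"
proof -
  have \<mu>': "prob_space \<mu>" "sets \<mu> = sets borel" "holonomic \<tau> \<mu>"
    using \<mu> by (auto simp: calibrated_measure_iff)
  have proj: "proj \<in> \<mu> \<rightarrow>\<^sub>M borel"
    by (rule measurable_proj[OF \<mu>'(2)])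
  have periodic: "periodic (\<lambda>x. g (torus_proj x))"
    by (simp add: periodic_def torus_proj_add_int_vec)
  have "integral\<^sup>L (distr \<mu> borel proj) (\<lambda>w. g (torus_step w)) = integral\<^sup>L \<mu> (\<lambda>z. g (torus_step (proj z)))"
    by (intro integral_distr proj borel_measurable_continuous_onI continuous_on_compose2[OF g continuous_on_torus_step]) auto
  also have "\<dots> = integral\<^sup>L \<mu> (\<lambda>z. g (torus_proj (fst z + \<tau> *\<^sub>R snd z)))"
    by (simp add: torus_step_proj[symmetric])
  also have "\<dots> = integral\<^sup>L \<mu> (\<lambda>z. g (torus_proj (fst z)))"
    by (rule holonomic_integral_shift[OF \<mu>' continuous_on_compose2[OF g continuous_on_torus_proj] periodic]) auto
  also have "\<dots> = integral\<^sup>L (distr \<mu> borel proj) (\<lambda>w. g (fst w))"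
    by (subst integral_distr[OF proj]) (auto simp: proj_def intro!: borel_measurable_continuous_onI
        continuous_on_compose2[OF g] continuous_intros)
  finally show ?thesis .
qed

lemma torus_step_measure_support:
  assumes "calibrated_measure \<mu>"
  shows "torus_step ` measure_support (distr \<mu> borel proj) = fst ` measure_support (distr \<mu> borel proj)"
proof -
  have \<rho>: "prob_space (distr \<mu> borel proj)" "sets (distr \<mu> borel proj) = sets borel"
      "compact (measure_support (distr \<mu> borel proj))"
    using assms compact_measure_support_proj
    by (auto simp: calibrated_measure_iff intro: prob_space_distr_proj)
  have fst: "continuous_on UNIV (fst :: (complex^'n) \<times> (real^'n) \<Rightarrow> complex^'n)"
    by (rule continuous_on_fst[OF continuous_on_id])
  show ?thesis
  proof
    show "torus_step ` measure_support (distr \<mu> borel proj) \<subseteq> fst ` measure_support (distr \<mu> borel proj)"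
      by (rule image_measure_support_subset[OF \<rho> continuous_on_torus_step fst integral_torus_step[OF assms]])
    show "fst ` measure_support (distr \<mu> borel proj) \<subseteq> torus_step ` measure_support (distr \<mu> borel proj)"
      by (rule image_measure_support_subset[OF \<rho> fst continuous_on_torus_step
            integral_torus_step[OF assms, symmetric]])
  qed
qed

lemma measure_support_predecessor:
  assumes \<mu>: "calibrated_measure \<mu>" and w: "proj (x, v) \<in> measure_support (distr \<mu> borel proj)"
  shows "\<exists>b. proj (x - \<tau> *\<^sub>R b, b) \<in> measure_support (distr \<mu> borel proj)"
proof -
  have "fst (proj (x, v)) \<in> torus_step ` measure_support (distr \<mu> borel proj)"
    unfolding torus_step_measure_support[OF \<mu>] using w by (rule imageI)
  then obtain \<zeta> b where \<zeta>: "(\<zeta>, b) \<in> measure_support (distr \<mu> borel proj)"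
    "\<zeta> * torus_proj (\<tau> *\<^sub>R b) = torus_proj x"
    by (auto simp: torus_step_def proj_def)
  have "\<zeta> = \<zeta> * torus_proj (\<tau> *\<^sub>R b) * torus_proj (- \<tau> *\<^sub>R b)"
    by (simp add: mult.assoc torus_proj_add[symmetric] torus_proj_0)
  then have "\<zeta> = torus_proj (x - \<tau> *\<^sub>R b)"
    by (simp add: \<zeta>(2) torus_proj_add[symmetric])
  with \<zeta>(1) show ?thesis
    by (auto simp: proj_def)
qed

lemma measure_support_successor:
  assumes \<mu>: "calibrated_measure \<mu>" and w: "proj (x, v) \<in> measure_support (distr \<mu> borel proj)"
  shows "\<exists>v'. proj (x + \<tau> *\<^sub>R v, v') \<in> measure_support (distr \<mu> borel proj)"
proof -
  have "torus_step (proj (x, v)) \<in> fst ` measure_support (distr \<mu> borel proj)"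
    unfolding torus_step_measure_support[OF \<mu>, symmetric] using w by (rule imageI)
  then have "torus_proj (x + \<tau> *\<^sub>R v) \<in> fst ` measure_support (distr \<mu> borel proj)"
    by (simp only: torus_step_proj)
  then show ?thesis
    by (auto simp: proj_def)
qed

lemma measure_support_subset_Aubry_set:
  assumes \<mu>: "calibrated_measure \<mu>"
  shows "measure_support (distr \<mu> borel proj) \<subseteq> Aubry_set H \<tau> c u"
proof -
  let ?S = "measure_support (distr \<mu> borel proj)"
  define A where "A = proj -` ?S"
  have A: "A \<subseteq> calibrated_pairs"
  proof
    fix z assume "z \<in> A"
    then have "proj z \<in> proj ` calibrated_pairs"
      using measure_support_proj_subset[OF \<mu>] by (auto simp: A_def)
    then show "z \<in> calibrated_pairs"
      by (rule mem_of_proj_mem[OF int_translation_invariant_calibrated_pairs])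
  qed
  have "A \<subseteq> Aubry_lift H \<tau> c u"
  proof (rule subset_Aubry_lift[OF A])
    fix x v assume "(x, v) \<in> A"
    then obtain b where "(x - \<tau> *\<^sub>R b, b) \<in> A"
      using measure_support_predecessor[OF \<mu>] by (auto simp: A_def)
    then show "\<exists>x' v'. (x', v') \<in> A \<and> x' + \<tau> *\<^sub>R v' = x"
      by (intro exI[of _ "x - \<tau> *\<^sub>R b"] exI[of _ b]) simp
  next
    fix x v assume "(x, v) \<in> A"
    then show "\<exists>v'. (x + \<tau> *\<^sub>R v, v') \<in> A"
      using measure_support_successor[OF \<mu>] by (simp add: A_def)
  qed
  moreover have "?S \<subseteq> proj ` A"
  proof
    fix w assume w: "w \<in> ?S"
    then obtain z where "w = proj z"
      using measure_support_proj_subset[OF \<mu>] by blast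
    with w show "w \<in> proj ` A"
      by (simp add: A_def)
  qed
  ultimately show ?thesis
    unfolding Aubry_set_def by (meson image_mono order_trans)
qed

lemma mather_measure_iff_calibrated_measure: "mather_measure H \<tau> \<mu> \<longleftrightarrow> calibrated_measure \<mu>"
proof
  assume \<mu>: "mather_measure H \<tau> \<mu>"
  obtain \<mu>\<^sub>0 where "calibrated_measure \<mu>\<^sub>0"
    using calibrated_measure_exists by blast
  then have "action H \<tau> \<mu> \<le> \<tau> * c"
    using \<mu> by (auto simp: mather_measure_def calibrated_measure_def)
  moreover have "admissible H \<tau> \<mu>"
    using \<mu> by (simp add: mather_measure_def)
  ultimately show "calibrated_measure \<mu>"
    using action_ge[of \<mu>] by (simp add: calibrated_measure_def)
next
  assume "calibrated_measure \<mu>"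
  then show "mather_measure H \<tau> \<mu>"
    using action_ge by (auto simp: mather_measure_def calibrated_measure_def)
qed

lemma Mather_set_eq:
  "Mather_set H \<tau> = closure (\<Union>{measure_support (distr \<mu> borel proj) | \<mu>. calibrated_measure \<mu>})"
  by (simp add: Mather_set_def mather_measure_iff_calibrated_measure)

lemma Mather_set_subset_Aubry_set: "Mather_set H \<tau> \<subseteq> Aubry_set H \<tau> c u"
  unfolding Mather_set_eq
  using measure_support_subset_Aubry_set
  by (intro closure_minimal compact_imp_closed[OF compact_Aubry_set]) blast

lemma compact_Mather_set: "compact (Mather_set H \<tau>)"
proof -
  have "\<Union>{measure_support (distr \<mu> borel proj) | \<mu>. calibrated_measure \<mu>} \<subseteq> proj ` calibrated_pairs"
    using measure_support_proj_subset by blast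
  then show ?thesis
    unfolding Mather_set_eq compact_closure
    by (rule bounded_subset[OF compact_imp_bounded[OF compact_proj_calibrated_pairs]])
qed

lemma Mather_set_nonempty: "Mather_set H \<tau> \<noteq> {}"
proof -
  obtain \<mu> where \<mu>: "calibrated_measure \<mu>"
    using calibrated_measure_exists by blast
  then have "measure_support (distr \<mu> borel proj) \<noteq> {}"
    by (intro measure_support_nonempty prob_space_distr_proj) (auto simp: calibrated_measure_iff)
  then show ?thesis
    unfolding Mather_set_eq using \<mu> closure_subset by blast
qed

end

theorem proposition3p6:
  fixes H :: "real^'n \<Rightarrow> real^'n \<Rightarrow> real" and \<tau> c :: real and u :: "real^'n \<Rightarrow> real"
  assumes "tonelli H"
    and "0 < \<tau>" and "\<tau> < 1"
    and "continuous_on UNIV u" and "periodic u"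
    and "solves_dLO H \<tau> c u"
  shows "Aubry_set H \<tau> c u \<noteq> {} \<and> compact (Aubry_set H \<tau> c u) \<and>
         Mather_set H \<tau> \<noteq> {} \<and> compact (Mather_set H \<tau>) \<and>
         Mather_set H \<tau> \<subseteq> Aubry_set H \<tau> c u"
proof -
  interpret dLO_solution H \<tau> c u
    using assms by (simp add: dLO_solution_def dLO_solution_axioms_def tonelli_hamiltonian_def)
  show ?thesis
    using Mather_set_nonempty compact_Mather_set Mather_set_subset_Aubry_set compact_Aubry_set
    by blast
qed

end
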